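(* Let $\Lambda$ be a Khovanov block. The product $(a\lambda b)(c\mu d)$ of two basis vectors of $H_\Lambda$ is a linear combination of basis vectors of the form $(a\nu d)$ with $\nu\in\Lambda$ satisfying $\lambda\le\nu\ge\mu$ in the Bruhat order.
   Context: A number line carries vertices indexed by consecutive integers. A weight labels each vertex by $\circ,\times,\vee,\wedge$ (outside a finite set no $\vee$ left of an $\wedge$); bounded if finitely many vertices. Bruhat order: generated by declaring that interchanging a $\vee$ with an $\wedge$ to its right makes a weight bigger. Blocks: classes of weights related by permuting $\vee$'s and $\wedge$'s. Cup diagrams: finitely many non-crossing cups joining pairs of vertices and rays down to infinity; cap diagrams similarly upward; $c^*$ mirror image. $c\lambda$ is an oriented cup diagram if free vertices are $\circ/\times$, cups have one $\vee$ and one $\wedge$ end, ray vertices are $\vee/\wedge$, no two rays labelled $\vee,\wedge$ in that order left to right; $\lambda c$ (cap diagram) oriented iff $c^*\lambda$ is. Clockwise cup/cap: left end $\wedge$; degree = number of clockwise cups/caps. A circle diagram $ab$ (cup diagram $a$ below cap diagram $b$) is closed if it has no rays; oriented circle diagram $a\lambda b$: $a\lambda$, $\lambda b$ oriented. Circles: anticlockwise ($1$) if leftmost vertex $\vee$, clockwise ($x$) otherwise. A Khovanov block of rank $n$ is a block of bounded weights each with exactly $n$ $\wedge$'s and $n$ $\vee$'s. Khovanov's algebra $H_\Lambda$ has basis $(a\lambda b)$ for all closed oriented circle diagrams with $\lambda\in\Lambda$. Multiplication: $(a\lambda b)(c\mu d)=0$ if $b^*\ne c$; otherwise draw $a\lambda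 b$ below $c\mu d$ and iterate surgery: cut a cap of $b$ and its mirror cup of $c$ connectable without crossings and rejoin as two vertical segments; reorient via $1\otimes1\mapsto1$, $1\otimes x\mapsto x$, $x\otimes1\mapsto x$, $x\otimes x\mapsto0$ (merge), $1\mapsto1\otimes x+x\otimes1$, $x\mapsto x\otimes x$ (split); when the middle has no cups/caps, identify the two number lines to get diagrams $a\nu d$ and sum the corresponding basis vectors. *)

theory Defs
  imports Main
begin

text \<open>Labels of vertices: Nought = circle, Cross = cross, Down = vee, Up = wedge.\<close>
datatype lab = Nought | Cross | Down | Up

text \<open>A weight: partial labelling of the integers; the domain is the set of vertices
  of the number line.\<close>
type_synonym weight = "int \<Rightarrow> lab option"

definition is_weight :: "weight \<Rightarrow> bool" where
  "is_weight w \<longleftrightarrow>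
     (\<forall>i j k. i \<le> j \<and> j \<le> k \<and> w i \<noteq> None \<and> w k \<noteq> None \<longrightarrow> w j \<noteq> None) \<and>
     (\<exists>F. finite F \<and> (\<forall>i j. i < j \<and> i \<notin> F \<and> j \<notin> F \<longrightarrow> \<not> (w i = Some Down \<and> w j = Some Up)))"

definition bounded_weight :: "weight \<Rightarrow> bool" where
  "bounded_weight w \<longleftrightarrow> finite (dom w)"

definition same_block :: "weight \<Rightarrow> weight \<Rightarrow> bool" where
  "same_block w v \<longleftrightarrow> (\<exists>\<pi>::int \<Rightarrow> int. bij \<pi> \<and> finite {i. \<pi> i \<noteq> i} \<and>
      (\<forall>i. \<pi> i \<noteq> i \<longrightarrow> w i \<in> {Some Down, Some Up}) \<and> v = w \<circ> \<pi>)"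

definition khovanov_block :: "nat \<Rightarrow> weight set \<Rightarrow> bool" where
  "khovanov_block n L \<longleftrightarrow>
     (\<exists>w0. is_weight w0 \<and> L = {v. is_weight v \<and> same_block w0 v}) \<and>
     (\<forall>v\<in>L. bounded_weight v \<and> card {i. v i = Some Up} = n \<and> card {i. v i = Some Down} = n)"

definition bruhat_step :: "weight \<Rightarrow> weight \<Rightarrow> bool" where
  "bruhat_step w v \<longleftrightarrow> (\<exists>i j. i < j \<and> w i = Some Down \<and> w j = Some Up \<and>
      v = w(i := Some Up, j := Some Down))"

definition bruhat_le :: "weight \<Rightarrow> weight \<Rightarrow> bool" where
  "bruhat_le = bruhat_step\<^sup>*\<^sup>*"

text \<open>A ray-free cup (or cap) diagram, given by its set of arcs (i,j), i<j.
  A cap diagram and its mirror cup diagram have the same set of arcs.\<close>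
definition arc_diagram :: "(int \<times> int) set \<Rightarrow> bool" where
  "arc_diagram A \<longleftrightarrow> finite A \<and> (\<forall>(i,j)\<in>A. i < j) \<and>
     (\<forall>(i,j)\<in>A. \<forall>(k,l)\<in>A. (i,j) \<noteq> (k,l) \<longrightarrow> {i,j} \<inter> {k,l} = {}) \<and>
     (\<forall>(i,j)\<in>A. \<forall>(k,l)\<in>A. \<not> (i < k \<and> k < j \<and> j < l))"

definition arc_oriented :: "(int \<times> int) set \<Rightarrow> weight \<Rightarrow> bool" where
  "arc_oriented A w \<longleftrightarrow> (\<forall>(i,j)\<in>A. {w i, w j} = {Some Down, Some Up}) \<and>
     (\<forall>p. w p \<in> {Some Down, Some Up} \<longrightarrow> (\<exists>(i,j)\<in>A. p = i \<or> p = j))"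

type_synonym basis = "(int \<times> int) set \<times> weight \<times> (int \<times> int) set"

text \<open>Basis vectors (a lam b): closed oriented circle diagrams with lam in the block.\<close>
definition basis_vec :: "weight set \<Rightarrow> basis \<Rightarrow> bool" where
  "basis_vec L x \<longleftrightarrow> (case x of (a, w, b) \<Rightarrow>
     arc_diagram a \<and> arc_diagram b \<and> w \<in> L \<and> arc_oriented a w \<and> arc_oriented b w)"

text \<open>Nodes of the stacked diagram: (False,p) on the bottom number line,
  (True,p) on the top number line.  Stacking a w b (bottom) under b* mu d (top);
  S is the set of arcs of b already cut by surgery (replaced by vertical segments).\<close>
type_synonym node = "bool \<times> int"

definition edges :: "(int\<times>int) set \<Rightarrow> (int\<times>int) set \<Rightarrow> (int\<times>int) set \<Rightarrow> (int\<times>int) set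
    \<Rightarrow> (node \<times> node) set" where
  "edges a b d S =
     {((False,i),(False,j)) | i j. (i,j) \<in> a} \<union>
     {((True,i),(True,j)) | i j. (i,j) \<in> d} \<union>
     {((False,i),(False,j)) | i j. (i,j) \<in> b - S} \<union>
     {((True,i),(True,j)) | i j. (i,j) \<in> b - S} \<union>
     {((False,i),(True,i)) | i j. (i,j) \<in> S} \<union>
     {((False,j),(True,j)) | i j. (i,j) \<in> S}"

definition conn :: "(node \<times> node) set \<Rightarrow> node \<Rightarrow> node \<Rightarrow> bool" where
  "conn E u v \<longleftrightarrow> (u, v) \<in> (E \<union> E\<inverse>)\<^sup>*"

text \<open>Circle labels: True = 1 (anticlockwise), False = x (clockwise);
  a labelling assigns to every node the label of its circle.\<close>
definition init_labels :: "(int\<times>int) set \<Rightarrow> (int\<times>int) set \<Rightarrow> (int\<times>int) set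
    \<Rightarrow> weight \<Rightarrow> weight \<Rightarrow> node \<Rightarrow> bool" where
  "init_labels a b d w m v =
     (let p = Min (snd ` {u. conn (edges a b d {}) v u})
      in if fst v then m p = Some Down else w p = Some Down)"

definition surg_step :: "(int\<times>int) set \<Rightarrow> (int\<times>int) set \<Rightarrow> (int\<times>int) set \<Rightarrow> (int\<times>int) set
    \<Rightarrow> (node \<Rightarrow> bool) \<Rightarrow> int \<times> int \<Rightarrow> (node \<Rightarrow> bool) list" where
  "surg_step a b d S L e =
     (let i = fst e; j = snd e; E = edges a b d S; E' = edges a b d (insert e S);
          u1 = (False, i); u2 = (True, i)
      in if \<not> conn E u1 u2 then
           (if \<not> L u1 \<and> \<not> L u2 then []
            else [\<lambda>v. if conn E' u1 v then (L u1 \<and> L u2) else L v])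
         else
           (let relab = (\<lambda>\<alpha> \<beta> v. if conn E' (False, i) v then \<alpha>
                                 else if conn E' (False, j) v then \<beta> else L v)
            in if L u1 then [relab True False, relab False True] else [relab False False]))"

fun surg :: "(int\<times>int) set \<Rightarrow> (int\<times>int) set \<Rightarrow> (int\<times>int) set \<Rightarrow> (int\<times>int) set
    \<Rightarrow> (node \<Rightarrow> bool) \<Rightarrow> (int \<times> int) list \<Rightarrow> (node \<Rightarrow> bool) list" where
  "surg a b d S L [] = [L]"
| "surg a b d S L (e # es) = concat (map (\<lambda>L'. surg a b d (insert e S) L' es) (surg_step a b d S L e))"

text \<open>Reading off the final orientation nu of a nu d after identifying the two number lines:
  a circle labelled 1 has its leftmost vertex labelled vee.\<close>
definition final_weight :: "(int\<times>int) set \<Rightarrow> (int\<times>int) set \<Rightarrow> (int\<times>int) set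
    \<Rightarrow> weight \<Rightarrow> (node \<Rightarrow> bool) \<Rightarrow> weight" where
  "final_weight a b d w L = (THE v.
     (\<forall>p. w p \<notin> {Some Down, Some Up} \<longrightarrow> v p = w p) \<and>
     (\<forall>p. w p \<in> {Some Down, Some Up} \<longrightarrow> v p \<in> {Some Down, Some Up}) \<and>
     arc_oriented a v \<and> arc_oriented d v \<and>
     (\<forall>p. w p \<in> {Some Down, Some Up} \<and>
          p = Min (snd ` {u. conn (edges a b d b) (False, p) u}) \<longrightarrow>
          (v p = Some Down \<longleftrightarrow> L (False, p))))"

text \<open>Surgery order: each cut cap/cup pair must be connectable without crossings,
  i.e. not enclosed by a pair that is still uncut.\<close>
definition encloses :: "int \<times> int \<Rightarrow> int \<times> int \<Rightarrow> bool" where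
  "encloses e f \<longleftrightarrow> fst e < fst f \<and> snd f < snd e"

definition admissible_order :: "(int\<times>int) set \<Rightarrow> (int\<times>int) list \<Rightarrow> bool" where
  "admissible_order b ord \<longleftrightarrow> distinct ord \<and> set ord = b \<and>
     (\<forall>k m. k < m \<and> m < length ord \<longrightarrow> \<not> encloses (ord ! m) (ord ! k))"

text \<open>Coefficient of the basis vector z in the product x y, computed by surgery in the order ord.\<close>
definition khov_mult :: "(int\<times>int) list \<Rightarrow> basis \<Rightarrow> basis \<Rightarrow> basis \<Rightarrow> 'k::comm_ring_1" where
  "khov_mult ord x y z = (case x of (a, w, b) \<Rightarrow> case y of (c, m, d) \<Rightarrow> case z of (a', v, d') \<Rightarrow>
     if b = c \<and> a' = a \<and> d' = d then
       of_nat (length (filter (\<lambda>L. final_weight a b d w L = v)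
                               (surg a b d {} (init_labels a b d w m) ord)))
     else 0)"

end

theory Submission
  imports Defs
begin

text \<open>Fix a cup diagram \<open>X\<close> (\<open>a\<close> or \<open>d\<close>) and a point \<open>v\<close>. On an oriented circle diagram the
  vee of an arc is at its left end iff the label (1 or x) of its circle differs from the parity
  of the number of arcs of that circle enclosing it; so the number of arcs of \<open>X\<close> spanning \<open>v\<close>
  with a vee at the left end can be computed from the circle labels alone. The arcs of one
  circle spanning \<open>v\<close> are nested, and comparing the two sides of a merge (\<open>1 \<otimes> 1 \<mapsto> 1\<close>, ...)
  or split (\<open>1 \<mapsto> 1 \<otimes> x + x \<otimes> 1\<close>, ...) shows that this count never increases. Before
  surgery it counts the vees of \<open>\<lambda>\<close> (for \<open>X = a\<close>) or \<open>\<mu>\<close> (for \<open>X = d\<close>) left of \<open>v\<close>, up to the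
  arcs ending left of \<open>v\<close>; after surgery it counts those of \<open>\<nu>\<close>. Hence \<open>\<nu>\<close> has at most as
  many vees as \<open>\<lambda>\<close> and \<open>\<mu>\<close> left of every point and equally many in total, and such a weight
  is reached from \<open>\<lambda>\<close> (or \<open>\<mu>\<close>) by moving vees to the right one at a time.\<close>

section \<open>Connectivity in graphs\<close>

lemma conn_refl [simp]: "conn E x x"
  by (simp add: conn_def)

lemma conn_sym: "conn E x y \<Longrightarrow> conn E y x"
proof -
  assume "conn E x y"
  then have "(y,x) \<in> ((E \<union> E\<inverse>)\<inverse>)\<^sup>*" unfolding conn_def by (simp add: rtrancl_converse)
  then show ?thesis unfolding conn_def by (simp add: converse_Un sup_commute)
qed

lemma conn_trans: "conn E x y \<Longrightarrow> conn E y z \<Longrightarrow> conn E x z"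
  unfolding conn_def by (rule rtrancl_trans)

lemma conn_edge: "(x,y) \<in> E \<Longrightarrow> conn E x y"
  unfolding conn_def by auto

lemma conn_edge_rev: "(y,x) \<in> E \<Longrightarrow> conn E x y"
  unfolding conn_def by auto

lemma conn_mono: "conn E x y \<Longrightarrow> E \<subseteq> E' \<Longrightarrow> conn E' x y"
  unfolding conn_def by (meson Un_mono converse_mono rtrancl_mono subsetD)

lemma conn_components_eq: "conn E x y \<Longrightarrow> {u. conn E x u} = {u. conn E y u}"
  using conn_trans conn_sym by blast

lemma conn_induct [consumes 1, case_names refl step]:
  assumes "conn E x y" "P x"
    and "\<And>z z'. conn E x z \<Longrightarrow> P z \<Longrightarrow> (z,z') \<in> E \<or> (z',z) \<in> E \<Longrightarrow> P z'"
  shows "P y"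
proof -
  have "(x,y) \<in> (E \<union> E\<inverse>)\<^sup>*" using assms(1) unfolding conn_def .
  then show ?thesis
  proof (induction rule: rtrancl_induct)
    case base then show ?case using assms(2) .
  next
    case (step y z)
    have "conn E x y" using step(1) unfolding conn_def .
    then show ?case using assms(3) step(2,3) by blast
  qed
qed

lemma conn_edgewise:
  assumes "conn E x y" and "\<And>z z'. (z,z') \<in> E \<Longrightarrow> conn E' z z'"
  shows "conn E' x y"
  using assms(1)
proof (induction rule: conn_induct)
  case (step z z')
  then show ?case using assms(2) conn_sym conn_trans by metis
qed simp

lemma conn_drop_unreached:
  assumes "conn (G \<union> F) x y"
    and "\<And>p q. (p,q) \<in> F \<Longrightarrow> conn (G \<union> F) x p \<Longrightarrow> False"
  shows "conn G x y"
  using assms(1)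
proof (induction rule: conn_induct)
  case (step z z')
  have "(z,z') \<in> G \<or> (z',z) \<in> G"
  proof (rule ccontr)
    assume "\<not> ?thesis"
    then have "(z,z') \<in> F \<or> (z',z) \<in> F" using step.hyps(2) by blast
    moreover have "conn (G \<union> F) x z'"
      using step.hyps(1,2) conn_trans conn_edge conn_edge_rev by metis
    ultimately show False using assms(2) step.hyps(1) by blast
  qed
  then show ?case using step.IH conn_trans conn_edge conn_edge_rev by metis
qed simp

definition constant_on_components :: "(node \<times> node) set \<Rightarrow> (node \<Rightarrow> bool) \<Rightarrow> bool" where
  "constant_on_components E L \<longleftrightarrow> (\<forall>x y. conn E x y \<longrightarrow> L x = L y)"

text \<open>\<open>E_arcs\<close> is a graph containing the cap \<open>u1 w1\<close> of the lower diagram and its mirror cup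
  \<open>u2 w2\<close>; surgery turns it into \<open>E_segs\<close>, where these are replaced by the vertical segments
  \<open>u1 u2\<close> and \<open>w1 w2\<close>.\<close>
locale edge_swap =
  fixes E0 :: "(node \<times> node) set" and u1 u2 w1 w2 :: node
begin

definition "E_arcs = E0 \<union> {(u1,w1),(u2,w2)}"
definition "E_segs = E0 \<union> {(u1,u2),(w1,w2)}"

lemma E_arcs_conn: "conn E_arcs u1 w1" "conn E_arcs u2 w2" "conn E_arcs w1 u1" "conn E_arcs w2 u2"
  by (rule conn_edge conn_edge_rev, simp add: E_arcs_def)+

lemma E_segs_conn: "conn E_segs u1 u2" "conn E_segs w1 w2" "conn E_segs u2 u1" "conn E_segs w2 w1"
  by (rule conn_edge conn_edge_rev, simp add: E_segs_def)+

lemma E0_conn_E_arcs: "conn E0 x y \<Longrightarrow> conn E_arcs x y"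
  using conn_mono unfolding E_arcs_def by blast

lemma E0_conn_E_segs: "conn E0 x y \<Longrightarrow> conn E_segs x y"
  using conn_mono unfolding E_segs_def by blast

definition "touches x \<longleftrightarrow> conn E_arcs x u1 \<or> conn E_arcs x u2"

lemma touches_conn: "conn E_arcs x y \<Longrightarrow> touches y \<Longrightarrow> touches x"
  unfolding touches_def using conn_trans by blast

lemma touches_nodes: "touches u1" "touches u2" "touches w1" "touches w2"
  unfolding touches_def using E_arcs_conn by auto

text \<open>Merge: the ends of each arc stay connected without it, and the segments join the circles
  through \<open>u1\<close> and \<open>u2\<close>.\<close>
lemma merge_conn_iff:
  assumes "conn E0 u1 w1" and "conn E0 u2 w2"
  shows "conn E_segs x y \<longleftrightarrow> conn E_arcs x y \<or> (touches x \<and> touches y)"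
proof
  assume "conn E_segs x y"
  then show "conn E_arcs x y \<or> (touches x \<and> touches y)"
  proof (induction rule: conn_induct)
    case (step z z')
    show ?case
    proof (cases "(z,z') \<in> E0 \<or> (z',z) \<in> E0")
      case True
      then have "conn E_arcs z z'" "conn E_arcs z' z"
        using E0_conn_E_arcs conn_edge conn_edge_rev by blast+
      then show ?thesis using step.IH conn_trans touches_conn by blast
    next
      case False
      then have "z \<in> {u1,u2,w1,w2}" "z' \<in> {u1,u2,w1,w2}"
        using step.hyps(2) unfolding E_segs_def by auto
      then have "touches z" "touches z'" using touches_nodes by auto
      then show ?thesis using step.IH touches_conn by blast
    qed
  qed simp
next
  have u1w1: "conn E_segs u1 w1" and u2w2: "conn E_segs u2 w2"
    using assms E0_conn_E_segs by blast+
  have arcs_segs: "conn E_segs x y" if "conn E_arcs x y" for x y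
    using that
  proof (rule conn_edgewise)
    fix z z' assume "(z,z') \<in> E_arcs"
    then show "conn E_segs z z'"
      using u1w1 u2w2 E0_conn_E_segs conn_edge unfolding E_arcs_def by blast
  qed
  assume "conn E_arcs x y \<or> (touches x \<and> touches y)"
  then show "conn E_segs x y"
  proof
    assume "touches x \<and> touches y"
    then have "conn E_segs x u1" "conn E_segs y u1"
      unfolding touches_def using arcs_segs conn_trans[OF _ E_segs_conn(3)] by blast+
    then show ?thesis using conn_sym conn_trans by metis
  qed (rule arcs_segs)
qed

text \<open>Split: both arcs lie on one circle, which the segments cut in two.\<close>
lemma split_conn_imp:
  assumes "conn E_arcs u1 u2" and "conn E_segs x y"
  shows "conn E_arcs x y"
  using assms(2)
proof (rule conn_edgewise)
  have "conn E_arcs w1 w2"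
    using conn_trans[OF conn_trans[OF E_arcs_conn(3) assms(1)] E_arcs_conn(2)] .
  then show "conn E_arcs z z'" if "(z,z') \<in> E_segs" for z z'
    using that assms(1) unfolding E_segs_def by (auto intro: conn_edge simp: E_arcs_def)
qed

lemma split_conn_cases:
  assumes "conn E_arcs x u1"
  shows "conn E_segs x u1 \<or> conn E_segs x w1"
proof -
  have "conn E_arcs u1 x" using assms conn_sym by metis
  then have "conn E_segs x u1 \<or> conn E_segs x w1 \<or> conn E_segs x u2 \<or> conn E_segs x w2"
  proof (induction rule: conn_induct)
    case (step z z')
    show ?case
    proof (cases "(z,z') \<in> E0 \<or> (z',z) \<in> E0")
      case True
      then have "conn E_segs z' z" using E0_conn_E_segs conn_edge conn_edge_rev by blast
      then show ?thesis using step.IH conn_trans by blast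
    next
      case False
      then have "z' \<in> {u1,u2,w1,w2}" using step.hyps(2) unfolding E_arcs_def by auto
      then show ?thesis by auto
    qed
  qed simp
  then show ?thesis using conn_trans[OF _ E_segs_conn(3)] conn_trans[OF _ E_segs_conn(4)] by blast
qed

lemma split_conn_away:
  assumes "conn E_arcs u1 u2" and "\<not> conn E_arcs x u1"
  shows "conn E_segs x y \<longleftrightarrow> conn E_arcs x y"
proof
  assume "conn E_arcs x y"
  have "conn E0 x y"
  proof (rule conn_drop_unreached[of E0 "{(u1,w1),(u2,w2)}"])
    show "conn (E0 \<union> {(u1,w1),(u2,w2)}) x y" using \<open>conn E_arcs x y\<close> by (simp add: E_arcs_def)
    fix p q assume "(p,q) \<in> {(u1,w1),(u2,w2)}" "conn (E0 \<union> {(u1,w1),(u2,w2)}) x p"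
    then have "p \<in> {u1,u2}" "conn E_arcs x p" unfolding E_arcs_def[symmetric] by auto
    then show False using conn_trans[OF _ conn_sym[OF assms(1)]] assms(2) by (cases x) auto
  qed
  then show "conn E_segs x y" using E0_conn_E_segs by blast
qed (rule split_conn_imp[OF assms(1)])

end

section \<open>Arc diagrams\<close>

lemma arc_diagram_finite: "arc_diagram X \<Longrightarrow> finite X"
  unfolding arc_diagram_def by simp

lemma arc_less: "arc_diagram M \<Longrightarrow> (i,j) \<in> M \<Longrightarrow> i < j"
  unfolding arc_diagram_def by blast

lemma arc_ends_disjoint:
  "arc_diagram M \<Longrightarrow> (i,j) \<in> M \<Longrightarrow> (k,l) \<in> M \<Longrightarrow> (i,j) \<noteq> (k,l) \<Longrightarrow> {i,j} \<inter> {k,l} = {}"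
  unfolding arc_diagram_def by blast

lemma arc_diagram_arcD:
  assumes "arc_diagram X" "e \<in> X" "e' \<in> X" "e \<noteq> e'"
  shows "fst e < snd e" "fst e \<noteq> fst e'" "fst e \<noteq> snd e'" "snd e \<noteq> snd e'" "snd e \<noteq> fst e'"
    "\<not> (fst e < fst e' \<and> fst e' < snd e \<and> snd e < snd e')"
proof -
  obtain i j k l where e: "e = (i,j)" and e': "e' = (k,l)" by force
  have "{i,j} \<inter> {k,l} = {}" using assms unfolding arc_diagram_def e e' by blast
  then show "fst e \<noteq> fst e'" "fst e \<noteq> snd e'" "snd e \<noteq> snd e'" "snd e \<noteq> fst e'"
    using e e' by auto
  show "fst e < snd e" using assms unfolding arc_diagram_def e by auto
  show "\<not> (fst e < fst e' \<and> fst e' < snd e \<and> snd e < snd e')"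
    using assms unfolding arc_diagram_def e e' by fastforce
qed

lemma arc_fst_less_snd: "arc_diagram X \<Longrightarrow> e \<in> X \<Longrightarrow> fst e < snd e"
  using arc_less[of X "fst e" "snd e"] by simp

text \<open>The arc \<open>e\<close> passes over the gap between \<open>v - 1\<close> and \<open>v\<close>.\<close>
definition spans :: "int \<Rightarrow> int \<times> int \<Rightarrow> bool" where
  "spans v e \<longleftrightarrow> fst e < v \<and> v \<le> snd e"

lemma spanning_arcs_nested:
  assumes "arc_diagram X" "e \<in> X" "e' \<in> X" "e \<noteq> e'" "spans v e" "spans v e'"
  shows "encloses e e' \<or> encloses e' e"
proof -
  note f = arc_diagram_arcD[OF assms(1-4)]
  note g = arc_diagram_arcD[OF assms(1,3,2) assms(4)[symmetric]]
  have "fst e < v" "v \<le> snd e" "fst e' < v" "v \<le> snd e'"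
    using assms(5,6) unfolding spans_def by auto
  then show ?thesis
    using f(2,4,6) g(6) unfolding encloses_def by (cases "fst e < fst e'") fastforce+
qed

definition arc_ends :: "(int \<times> int) set \<Rightarrow> int set" where
  "arc_ends M = {p. \<exists>q. (p,q) \<in> M \<or> (q,p) \<in> M}"

definition partner :: "(int \<times> int) set \<Rightarrow> int \<Rightarrow> int" where
  "partner M p = (THE q. (p,q) \<in> M \<or> (q,p) \<in> M)"

lemma partner_eqI:
  assumes M: "arc_diagram M" and pq: "(p,q) \<in> M \<or> (q,p) \<in> M"
  shows "partner M p = q"
  unfolding partner_def
proof (rule the_equality)
  fix r assume "(p,r) \<in> M \<or> (r,p) \<in> M"
  with pq show "r = q"
    using arc_ends_disjoint[OF M] arc_less[OF M] by (elim disjE) (fastforce+)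
qed (fact pq)

lemma partner_arc:
  assumes M: "arc_diagram M" and p: "p \<in> arc_ends M"
  shows "(p, partner M p) \<in> M \<or> (partner M p, p) \<in> M"
  using p partner_eqI[OF M] unfolding arc_ends_def by blast

lemma partner_in_arc_ends: "arc_diagram M \<Longrightarrow> p \<in> arc_ends M \<Longrightarrow> partner M p \<in> arc_ends M"
  using partner_arc unfolding arc_ends_def by blast

lemma partner_partner: "arc_diagram M \<Longrightarrow> p \<in> arc_ends M \<Longrightarrow> partner M (partner M p) = p"
  using partner_arc partner_eqI by metis

lemma partner_neq: "arc_diagram M \<Longrightarrow> p \<in> arc_ends M \<Longrightarrow> partner M p \<noteq> p"
  using partner_arc arc_less by fastforce

lemma finite_arc_ends: "arc_diagram M \<Longrightarrow> finite (arc_ends M)"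
proof -
  assume M: "arc_diagram M"
  have "arc_ends M \<subseteq> fst ` M \<union> snd ` M" unfolding arc_ends_def by force
  then show ?thesis using arc_diagram_finite[OF M] finite_subset by blast
qed

definition arcs_alternate :: "(int \<times> int) set \<Rightarrow> weight \<Rightarrow> bool" where
  "arcs_alternate M w \<longleftrightarrow> (\<forall>(p,q)\<in>M. {w p, w q} = {Some Down, Some Up})"

lemma arcs_alternateD:
  "arcs_alternate M w \<Longrightarrow> (p,q) \<in> M \<Longrightarrow> (w p = Some Down) \<noteq> (w q = Some Down)"
  unfolding arcs_alternate_def by (auto simp: doubleton_eq_iff)

lemma arc_oriented_alternate: "arc_oriented M w \<Longrightarrow> arcs_alternate M w"
  unfolding arc_oriented_def arcs_alternate_def by blast

lemma arc_ends_oriented: "arc_oriented M w \<Longrightarrow> arc_ends M = {p. w p \<in> {Some Down, Some Up}}"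
  unfolding arc_oriented_def arc_ends_def by (auto simp: doubleton_eq_iff)

text \<open>Among \<open>k\<close> nested arcs of a circle labelled \<open>l\<close>, the number of arcs with a vee at their
  left end (see \<open>left_down\<close> below).\<close>
definition alt_count :: "bool \<Rightarrow> nat \<Rightarrow> nat" where
  "alt_count l k = (if l then (k+1) div 2 else k div 2)"

lemma card_parity_below: "card {t. t < k \<and> l \<noteq> odd t} = alt_count l k"
proof (induction k)
  case 0 then show ?case by (simp add: alt_count_def)
next
  case (Suc k)
  have "{t. t < Suc k \<and> l \<noteq> odd t} = (if l \<noteq> odd k then insert k else id) {t. t < k \<and> l \<noteq> odd t}"
    by (auto simp: less_Suc_eq)
  then show ?case using Suc.IH by (cases l) (auto simp: alt_count_def)
qed

lemma alt_count_bounds: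
  "2 * alt_count l k \<le> k + 1" "k \<le> 2 * alt_count l k + 1"
  "l \<Longrightarrow> k \<le> 2 * alt_count l k" "\<not> l \<Longrightarrow> 2 * alt_count l k \<le> k"
  unfolding alt_count_def by (cases l; simp; linarith)+

lemma alt_count_merge: "a \<or> b \<Longrightarrow> alt_count (a \<and> b) (k1 + k2) \<le> alt_count a k1 + alt_count b k2"
  using alt_count_bounds[where l=a and k=k1] alt_count_bounds[where l=b and k=k2] alt_count_bounds[where l="a \<and> b" and k="k1 + k2"]
  by (cases a; cases b) auto

lemma alt_count_False_le: "alt_count False k \<le> alt_count l k"
  unfolding alt_count_def by (simp add: div_le_mono)

lemma alt_count_split:
  "(if l then a \<noteq> b else \<not> a \<and> \<not> b) \<Longrightarrow> alt_count a k1 + alt_count b k2 \<le> alt_count l (k1 + k2)"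
  using alt_count_bounds[where l=a and k=k1] alt_count_bounds[where l=b and k=k2] alt_count_bounds[where l=l and k="k1 + k2"]
  by (cases l; cases a; cases b) auto

text \<open>The arcs of a diagram spanning a common gap form a chain under enclosure, so their
  nesting depths are exactly \<open>0, \<dots>, card K - 1\<close>.\<close>
lemma card_nesting_parity:
  assumes X: "arc_diagram X" and KX: "K \<subseteq> X" and spans: "\<forall>e\<in>K. spans v e"
  shows "card {e\<in>K. l \<noteq> odd (card {e'\<in>K. encloses e' e})} = alt_count l (card K)"
proof -
  have fin: "finite K" using finite_subset[OF KX arc_diagram_finite[OF X]] .
  define h where "h e = card {e'\<in>K. encloses e' e}" for e
  have hlt: "h e < card K" if "e \<in> K" for e
  proof -
    have "{e'\<in>K. encloses e' e} \<subseteq> K - {e}" by (auto simp: encloses_def)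
    then have "h e \<le> card (K - {e})" unfolding h_def using fin by (intro card_mono) auto
    then show ?thesis using card_Diff1_less[OF fin that] by linarith
  qed
  have hmono: "h e < h e'" if "e \<in> K" "encloses e e'" for e e'
  proof -
    have "insert e {e''\<in>K. encloses e'' e} \<subseteq> {e''\<in>K. encloses e'' e'}"
      using that by (auto simp: encloses_def)
    moreover have "e \<notin> {e''\<in>K. encloses e'' e}" by (auto simp: encloses_def)
    ultimately have "card (insert e {e''\<in>K. encloses e'' e}) \<le> h e'"
      unfolding h_def using fin by (intro card_mono) auto
    then show ?thesis unfolding h_def using fin \<open>e \<notin> _\<close> by simp
  qed
  have inj: "inj_on h K"
  proof (rule inj_onI, rule ccontr)
    fix e e' assume "e \<in> K" "e' \<in> K" "h e = h e'" "e \<noteq> e'"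
    then have "encloses e e' \<or> encloses e' e" using spanning_arcs_nested[OF X] KX spans by blast
    then show False using hmono \<open>e \<in> K\<close> \<open>e' \<in> K\<close> \<open>h e = h e'\<close> by fastforce
  qed
  have "h ` K \<subseteq> {..<card K}" using hlt by auto
  then have img: "h ` K = {..<card K}"
    using card_image[OF inj] by (metis card_lessThan card_subset_eq finite_lessThan)
  have "card {e\<in>K. l \<noteq> odd (h e)} = card (h ` {e\<in>K. l \<noteq> odd (h e)})"
    using inj by (intro card_image[symmetric]) (auto intro: inj_on_subset)
  also have "h ` {e\<in>K. l \<noteq> odd (h e)} = {t. t < card K \<and> l \<noteq> odd t}"
    using img by auto
  finally show ?thesis using card_parity_below unfolding h_def by simp
qed

section \<open>A potential decreased by surgery\<close>

text \<open>For a labelling \<open>L\<close> of the circles of \<open>E\<close> on line \<open>s\<close>, the left end of the arc \<open>e\<close> of \<open>X\<close>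
  is a vee iff the label of its circle differs from the parity of the number of arcs of
  the same circle enclosing \<open>e\<close>.\<close>
definition left_down :: "bool \<Rightarrow> (node \<times> node) set \<Rightarrow> (node \<Rightarrow> bool) \<Rightarrow> (int \<times> int) set
    \<Rightarrow> int \<times> int \<Rightarrow> bool" where
  "left_down s E L X e \<longleftrightarrow>
     L (s, fst e) \<noteq> odd (card {e'\<in>X. encloses e' e \<and> conn E (s, fst e) (s, fst e')})"

definition down_potential :: "bool \<Rightarrow> (node \<times> node) set \<Rightarrow> (node \<Rightarrow> bool) \<Rightarrow> (int \<times> int) set
    \<Rightarrow> int \<Rightarrow> nat" where
  "down_potential s E L X v = card {e\<in>X. spans v e \<and> left_down s E L X e}"

lemma card_filter_split:
  assumes "finite A" "B \<subseteq> A"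
  shows "card {e\<in>A. P e} = card {e\<in>B. P e} + card {e\<in>A - B. P e}"
proof -
  have "{e\<in>A. P e} = {e\<in>B. P e} \<union> {e\<in>A - B. P e}" using assms(2) by auto
  moreover have "finite B" using assms finite_subset by blast
  then have "finite {e\<in>B. P e}" "finite {e\<in>A - B. P e}" using assms(1) by auto
  ultimately show ?thesis by (simp add: card_Un_disjoint disjoint_iff)
qed

lemma card_left_down_class:
  assumes X: "arc_diagram X" and L: "constant_on_components E L"
    and K: "K = {e\<in>X. spans v e \<and> conn E (s, fst e) u}"
  shows "card {e\<in>K. left_down s E L X e} = alt_count (L u) (card K)"
proof -
  have "left_down s E L X e \<longleftrightarrow> L u \<noteq> odd (card {e'\<in>K. encloses e' e})" if e: "e \<in> K" for e
  proof -
    have c: "conn E (s, fst e) u" using e K by simp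
    then have "L (s, fst e) = L u" using L unfolding constant_on_components_def by blast
    moreover have "{e'\<in>X. encloses e' e \<and> conn E (s, fst e) (s, fst e')} = {e'\<in>K. encloses e' e}"
    proof (intro set_eqI iffI)
      fix e' assume e': "e' \<in> {e'\<in>X. encloses e' e \<and> conn E (s, fst e) (s, fst e')}"
      then have "spans v e'" using e K unfolding encloses_def spans_def by auto
      moreover have "conn E (s, fst e') u" using e' conn_trans[OF conn_sym c] by blast
      ultimately show "e' \<in> {e'\<in>K. encloses e' e}" using e' K by blast
    next
      fix e' assume e': "e' \<in> {e'\<in>K. encloses e' e}"
      then have "conn E (s, fst e) (s, fst e')" using K conn_trans[OF c conn_sym] by blast
      then show "e' \<in> {e'\<in>X. encloses e' e \<and> conn E (s, fst e) (s, fst e')}" using e' K by blast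
    qed
    ultimately show ?thesis unfolding left_down_def by simp
  qed
  then have "{e\<in>K. left_down s E L X e} = {e\<in>K. L u \<noteq> odd (card {e'\<in>K. encloses e' e})}"
    by blast
  also have "card \<dots> = alt_count (L u) (card K)"
    by (rule card_nesting_parity[OF X]) (auto simp: K)
  finally show ?thesis .
qed

lemma down_potential_class_split:
  assumes X: "arc_diagram X" and L: "constant_on_components E L"
    and K: "K = {e\<in>X. spans v e \<and> conn E (s, fst e) u}"
  shows "down_potential s E L X v
    = alt_count (L u) (card K) + card {e\<in>{e\<in>X. spans v e} - K. left_down s E L X e}"
proof -
  have fin: "finite {e\<in>X. spans v e}" "K \<subseteq> {e\<in>X. spans v e}"
    using arc_diagram_finite[OF X] K by auto
  have "down_potential s E L X v = card {e\<in>{e\<in>X. spans v e}. left_down s E L X e}"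
    unfolding down_potential_def by (rule arg_cong[where f=card]) auto
  also have "\<dots> = card {e\<in>K. left_down s E L X e} + card {e\<in>{e\<in>X. spans v e} - K. left_down s E L X e}"
    by (rule card_filter_split[OF fin])
  also have "card {e\<in>K. left_down s E L X e} = alt_count (L u) (card K)"
    by (rule card_left_down_class[OF X L K])
  finally show ?thesis .
qed

context edge_swap
begin

lemma merge_labels_constant:
  assumes u1w1: "conn E0 u1 w1" and u2w2: "conn E0 u2 w2" and L: "constant_on_components E_arcs L"
  shows "constant_on_components E_segs (\<lambda>x. if conn E_segs u1 x then c else L x)"
  unfolding constant_on_components_def
proof (intro allI impI)
  fix x y assume xy: "conn E_segs x y"
  show "(if conn E_segs u1 x then c else L x) = (if conn E_segs u1 y then c else L y)"
  proof (cases "conn E_segs u1 x")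
    case False
    then have "\<not> conn E_segs u1 y" using conn_trans[OF _ conn_sym[OF xy]] by blast
    moreover have "\<not> touches x"
      using False conn_sym merge_conn_iff[OF u1w1 u2w2, of x u1] touches_nodes(1) by blast
    moreover have "L x = L y"
      using merge_conn_iff[OF u1w1 u2w2] xy \<open>\<not> touches x\<close> L unfolding constant_on_components_def by blast
    ultimately show ?thesis using False by simp
  qed (use conn_trans[OF _ xy] in simp)
qed

lemma split_labels_constant:
  assumes u1u2: "conn E_arcs u1 u2" and L: "constant_on_components E_arcs L"
  shows "constant_on_components E_segs (\<lambda>x. if conn E_segs u1 x then \<alpha> else if conn E_segs w1 x then \<beta> else L x)"
  unfolding constant_on_components_def
proof (intro allI impI)
  fix x y assume xy: "conn E_segs x y"
  then have "conn E_segs u1 x \<longleftrightarrow> conn E_segs u1 y" "conn E_segs w1 x \<longleftrightarrow> conn E_segs w1 y"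
    using conn_trans conn_sym by blast+
  moreover have "L x = L y" using L split_conn_imp[OF u1u2 xy] unfolding constant_on_components_def by blast
  ultimately show "(if conn E_segs u1 x then \<alpha> else if conn E_segs w1 x then \<beta> else L x)
      = (if conn E_segs u1 y then \<alpha> else if conn E_segs w1 y then \<beta> else L y)" by simp
qed

text \<open>The arcs spanning \<open>v\<close> on the two merged circles form one chain, whose count
  \<open>alt_count\<close> is at most the sum of the counts of the two chains.\<close>
lemma down_potential_merge:
  assumes X: "arc_diagram X" and u1w1: "conn E0 u1 w1" and u2w2: "conn E0 u2 w2"
    and apart: "\<not> conn E_arcs u1 u2" and L: "constant_on_components E_arcs L"
    and lab: "L u1 \<or> L u2"
  defines "L' \<equiv> \<lambda>x. if conn E_segs u1 x then L u1 \<and> L u2 else L x"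
  shows "down_potential s E_segs L' X v \<le> down_potential s E_arcs L X v"
proof -
  have mc: "conn E_segs x y \<longleftrightarrow> conn E_arcs x y \<or> (touches x \<and> touches y)" for x y
    using merge_conn_iff[OF u1w1 u2w2] .
  have U1: "conn E_segs x u1 \<longleftrightarrow> touches x" for x
    using mc[of x u1] touches_nodes(1) touches_conn by blast
  define Y where "Y = {e\<in>X. spans v e}"
  define K1 where "K1 = {e\<in>X. spans v e \<and> conn E_arcs (s, fst e) u1}"
  define K2 where "K2 = {e\<in>X. spans v e \<and> conn E_arcs (s, fst e) u2}"
  define K where "K = {e\<in>X. spans v e \<and> conn E_segs (s, fst e) u1}"
  have KK: "K = K1 \<union> K2" unfolding K_def K1_def K2_def using U1 unfolding touches_def by blast
  have dis: "K1 \<inter> K2 = {}"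
    using apart conn_trans[OF conn_sym] unfolding K1_def K2_def by blast
  have fin: "finite (Y - K1)" "K2 \<subseteq> Y - K1" "finite K1" "finite K2"
    using arc_diagram_finite[OF X] dis unfolding Y_def K1_def K2_def by auto
  have same: "left_down s E_segs L' X e = left_down s E_arcs L X e" if "e \<in> Y - K" for e
  proof -
    have "\<not> touches (s, fst e)" using that U1 unfolding K_def Y_def by blast
    then have "\<not> conn E_segs u1 (s, fst e)" "conn E_segs (s, fst e) y \<longleftrightarrow> conn E_arcs (s, fst e) y" for y
      using U1 conn_sym mc by blast+
    then show ?thesis unfolding left_down_def L'_def by simp
  qed
  have "down_potential s E_segs L' X v = alt_count (L u1 \<and> L u2) (card K) + card {e\<in>Y - K. left_down s E_segs L' X e}"
    using down_potential_class_split[OF X merge_labels_constant[OF u1w1 u2w2 L] K_def]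
    unfolding L'_def Y_def by simp
  also have "card {e\<in>Y - K. left_down s E_segs L' X e} = card {e\<in>Y - K. left_down s E_arcs L X e}"
    using same by (intro arg_cong[where f=card]) auto
  also have "card K = card K1 + card K2" unfolding KK using card_Un_disjoint[OF fin(3,4) dis] .
  finally have new: "down_potential s E_segs L' X v
      = alt_count (L u1 \<and> L u2) (card K1 + card K2) + card {e\<in>Y - K. left_down s E_arcs L X e}" .
  have "down_potential s E_arcs L X v = alt_count (L u1) (card K1) + card {e\<in>Y - K1. left_down s E_arcs L X e}"
    using down_potential_class_split[OF X L K1_def] unfolding Y_def .
  also have "card {e\<in>Y - K1. left_down s E_arcs L X e}
      = card {e\<in>K2. left_down s E_arcs L X e} + card {e\<in>Y - K1 - K2. left_down s E_arcs L X e}"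
    using card_filter_split[OF fin(1,2)] .
  also have "Y - K1 - K2 = Y - K" using KK by blast
  also have "card {e\<in>K2. left_down s E_arcs L X e} = alt_count (L u2) (card K2)"
    using card_left_down_class[OF X L K2_def] .
  finally have old: "down_potential s E_arcs L X v
      = alt_count (L u1) (card K1) + (alt_count (L u2) (card K2) + card {e\<in>Y - K. left_down s E_arcs L X e})" .
  show ?thesis using new old alt_count_merge[OF lab, of "card K1" "card K2"] by linarith
qed

text \<open>Cutting a circle splits the chain of its arcs spanning \<open>v\<close> into two chains, labelled
  according to the split rule.\<close>
lemma down_potential_split:
  assumes X: "arc_diagram X" and u1u2: "conn E_arcs u1 u2" and L: "constant_on_components E_arcs L"
    and lab: "if L u1 then \<alpha> \<noteq> \<beta> else \<not> \<alpha> \<and> \<not> \<beta>"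
  defines "L' \<equiv> \<lambda>x. if conn E_segs u1 x then \<alpha> else if conn E_segs w1 x then \<beta> else L x"
  shows "down_potential s E_segs L' X v \<le> down_potential s E_arcs L X v"
proof -
  have sc: "conn E_arcs x y" if "conn E_segs x y" for x y using split_conn_imp[OF u1u2 that] .
  have L': "constant_on_components E_segs L'" unfolding L'_def using split_labels_constant[OF u1u2 L] .
  define Y where "Y = {e\<in>X. spans v e}"
  define K where "K = {e\<in>X. spans v e \<and> conn E_arcs (s, fst e) u1}"
  define K1 where "K1 = {e\<in>X. spans v e \<and> conn E_segs (s, fst e) u1}"
  define K2 where "K2 = {e\<in>X. spans v e \<and> conn E_segs (s, fst e) w1}"
  have KK: "K = K1 \<union> K2"
  proof (intro set_eqI iffI)
    fix e assume "e \<in> K"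
    then show "e \<in> K1 \<union> K2" using split_conn_cases unfolding K_def K1_def K2_def by auto
  next
    fix e assume "e \<in> K1 \<union> K2"
    then show "e \<in> K" using sc conn_trans[OF _ E_arcs_conn(3)] unfolding K_def K1_def K2_def by blast
  qed
  have fin: "finite (Y - K1)" "K2 - K1 \<subseteq> Y - K1" "finite K1" "finite K2"
    using arc_diagram_finite[OF X] unfolding Y_def K1_def K2_def by auto
  have same: "left_down s E_segs L' X e = left_down s E_arcs L X e" if "e \<in> Y - K" for e
  proof -
    have away: "\<not> conn E_arcs (s, fst e) u1" using that unfolding K_def Y_def by blast
    then have "\<not> conn E_segs u1 (s, fst e)" "\<not> conn E_segs w1 (s, fst e)"
      using sc conn_sym conn_trans[OF _ E_arcs_conn(3)] by blast+
    then show ?thesis using split_conn_away[OF u1u2 away] unfolding left_down_def L'_def by simp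
  qed
  have rest: "card {e\<in>Y - K. left_down s E_segs L' X e} = card {e\<in>Y - K. left_down s E_arcs L X e}"
    using same by (intro arg_cong[where f=card]) auto
  have "down_potential s E_segs L' X v = alt_count \<alpha> (card K1) + card {e\<in>Y - K1. left_down s E_segs L' X e}"
    using down_potential_class_split[OF X L' K1_def] unfolding L'_def Y_def by simp
  also have "card {e\<in>Y - K1. left_down s E_segs L' X e}
      = card {e\<in>K2 - K1. left_down s E_segs L' X e} + card {e\<in>Y - K1 - (K2 - K1). left_down s E_segs L' X e}"
    using card_filter_split[OF fin(1,2)] .
  also have "Y - K1 - (K2 - K1) = Y - K" using KK by blast
  finally have new: "down_potential s E_segs L' X v = alt_count \<alpha> (card K1)
      + card {e\<in>K2 - K1. left_down s E_segs L' X e} + card {e\<in>Y - K. left_down s E_arcs L X e}"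
    using rest by simp
  have old: "down_potential s E_arcs L X v = alt_count (L u1) (card K) + card {e\<in>Y - K. left_down s E_arcs L X e}"
    using down_potential_class_split[OF X L K_def] unfolding Y_def .
  have "alt_count \<alpha> (card K1) + card {e\<in>K2 - K1. left_down s E_segs L' X e} \<le> alt_count (L u1) (card K)"
  proof (cases "conn E_segs u1 w1")
    case True
    then have "K2 \<subseteq> K1" using conn_trans[OF _ conn_sym[OF True]] unfolding K1_def K2_def by blast
    then have "K1 = K" "{e\<in>K2 - K1. left_down s E_segs L' X e} = {}" using KK by blast+
    then have "K1 = K" "card {e\<in>K2 - K1. left_down s E_segs L' X e} = 0" by (simp_all only: card.empty)
    moreover have "alt_count \<alpha> (card K) \<le> alt_count (L u1) (card K)"
      using lab alt_count_False_le by (cases \<alpha>; cases "L u1") auto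
    ultimately show ?thesis by simp
  next
    case False
    have dis: "K1 \<inter> K2 = {}" using False conn_trans[OF conn_sym] unfolding K1_def K2_def by blast
    then have "K2 - K1 = K2" by blast
    moreover have "L' w1 = \<beta>" using False conn_sym unfolding L'_def by auto
    ultimately have "card {e\<in>K2 - K1. left_down s E_segs L' X e} = alt_count \<beta> (card K2)"
      using card_left_down_class[OF X L' K2_def] by simp
    moreover have "card K1 + card K2 = card K" unfolding KK using card_Un_disjoint[OF fin(3,4) dis] by simp
    ultimately show ?thesis using alt_count_split[OF lab, of "card K1" "card K2"] by simp
  qed
  then show ?thesis using new old by linarith
qed

end

section \<open>Circles of a stacked diagram\<close>

locale involution_pair =
  fixes N :: "'a set" and \<alpha> \<beta> :: "'a \<Rightarrow> 'a"
  assumes finite_N: "finite N"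
    and \<alpha>_closed: "\<And>z. z \<in> N \<Longrightarrow> \<alpha> z \<in> N" and \<beta>_closed: "\<And>z. z \<in> N \<Longrightarrow> \<beta> z \<in> N"
    and \<alpha>_\<alpha>: "\<And>z. z \<in> N \<Longrightarrow> \<alpha> (\<alpha> z) = z" and \<beta>_\<beta>: "\<And>z. z \<in> N \<Longrightarrow> \<beta> (\<beta> z) = z"
    and \<alpha>_neq: "\<And>z. z \<in> N \<Longrightarrow> \<alpha> z \<noteq> z" and \<beta>_neq: "\<And>z. z \<in> N \<Longrightarrow> \<beta> z \<noteq> z"
begin

definition "rot = \<beta> \<circ> \<alpha>"

lemma rot_pow_closed: "z \<in> N \<Longrightarrow> (rot ^^ t) z \<in> N"
  by (induction t) (auto simp: rot_def \<alpha>_closed \<beta>_closed)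

lemma rot_inj: "z \<in> N \<Longrightarrow> y \<in> N \<Longrightarrow> rot z = rot y \<Longrightarrow> z = y"
  unfolding rot_def by (metis \<alpha>_\<alpha> \<beta>_\<beta> \<alpha>_closed comp_apply)

lemma rot_pow_inj: "z \<in> N \<Longrightarrow> y \<in> N \<Longrightarrow> (rot ^^ t) z = (rot ^^ t) y \<Longrightarrow> z = y"
  by (induction t) (auto dest: rot_inj[OF rot_pow_closed rot_pow_closed])

lemma rot_pow_conj: "y \<in> N \<Longrightarrow> (rot ^^ t) (\<alpha> ((rot ^^ t) y)) = \<alpha> y"
proof (induction t arbitrary: y)
  case (Suc t)
  have "rot (\<alpha> (rot z)) = \<alpha> z" if "z \<in> N" for z
    unfolding rot_def using that \<alpha>_\<alpha> \<beta>_\<beta> \<alpha>_closed \<beta>_closed by simp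
  moreover have "(rot ^^ Suc t) (\<alpha> ((rot ^^ Suc t) y)) = (rot ^^ t) (rot (\<alpha> (rot ((rot ^^ t) y))))"
    by (simp add: funpow_swap1)
  ultimately show ?case using Suc rot_pow_closed by simp
qed simp

text \<open>If \<open>rot\<^sup>m x = \<alpha> x\<close>, conjugating halfway would produce a fixed point of \<open>\<alpha>\<close> or \<open>\<beta>\<close>.\<close>
lemma rot_pow_neq_\<alpha>: assumes x: "x \<in> N" shows "(rot ^^ m) x \<noteq> \<alpha> x"
proof
  assume h: "(rot ^^ m) x = \<alpha> x"
  obtain s where "m = 2*s \<or> m = 2*s+1" by (metis oddE evenE)
  then show False
  proof
    assume "m = 2*s"
    then have "(rot ^^ s) (\<alpha> ((rot ^^ s) x)) = (rot ^^ s) ((rot ^^ s) x)"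
      using rot_pow_conj[OF x, of s] h by (simp add: funpow_add mult_2)
    then have "\<alpha> ((rot ^^ s) x) = (rot ^^ s) x"
      using rot_pow_inj \<alpha>_closed rot_pow_closed x by blast
    then show False using \<alpha>_neq rot_pow_closed x by metis
  next
    assume "m = 2*s+1"
    then have "(rot ^^ s) (\<alpha> ((rot ^^ s) x)) = (rot ^^ s) (rot ((rot ^^ s) x))"
      using rot_pow_conj[OF x, of s] h by (simp add: funpow_add mult_2 funpow_swap1)
    then have "\<alpha> ((rot ^^ s) x) = rot ((rot ^^ s) x)"
      using rot_pow_inj \<alpha>_closed \<beta>_closed rot_pow_closed x unfolding rot_def by simp
    then have "\<beta> (\<alpha> ((rot ^^ s) x)) = \<alpha> ((rot ^^ s) x)" unfolding rot_def by simp
    then show False using \<beta>_neq \<alpha>_closed rot_pow_closed x by metis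
  qed
qed

lemma rot_returns: assumes x: "x \<in> N" shows "\<exists>k>0. (rot ^^ k) x = x"
proof -
  have "\<not> inj_on (\<lambda>t. (rot ^^ t) x) {0..card N}"
  proof
    assume "inj_on (\<lambda>t. (rot ^^ t) x) {0..card N}"
    then have "card ((\<lambda>t. (rot ^^ t) x) ` {0..card N}) = Suc (card N)" by (simp add: card_image)
    moreover have "(\<lambda>t. (rot ^^ t) x) ` {0..card N} \<subseteq> N" using rot_pow_closed x by auto
    then have "card ((\<lambda>t. (rot ^^ t) x) ` {0..card N}) \<le> card N" using finite_N card_mono by blast
    ultimately show False by simp
  qed
  then obtain i j where ij: "i < j" "(rot ^^ i) x = (rot ^^ j) x"
    unfolding inj_on_def by (metis linorder_neqE_nat)
  have "(rot ^^ i) ((rot ^^ (j - i)) x) = (rot ^^ (i + (j - i))) x" by (simp add: funpow_add)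
  then have "(rot ^^ i) ((rot ^^ (j - i)) x) = (rot ^^ i) x" using ij by simp
  then have "(rot ^^ (j - i)) x = x" using rot_pow_inj rot_pow_closed x by blast
  then show ?thesis using ij by (intro exI[of _ "j - i"]) auto
qed

text \<open>In the graph whose edges are the \<open>\<alpha>\<close>- and \<open>\<beta>\<close>-steps every component is a cycle, so
  \<open>\<beta> x\<close> is reached from \<open>x\<close> even when the \<open>\<beta>\<close>-edge at \<open>x\<close> is removed.\<close>
definition "steps_avoiding x = {(z, \<alpha> z) | z. z \<in> N} \<union> {(z, \<beta> z) | z. z \<in> N \<and> z \<noteq> x \<and> z \<noteq> \<beta> x}"

lemma \<beta>_reachable_avoiding: assumes x: "x \<in> N" shows "(x, \<beta> x) \<in> (steps_avoiding x)\<^sup>*"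
proof -
  define k where "k = (LEAST k. k > 0 \<and> (rot ^^ k) x = x)"
  have k: "k > 0" "(rot ^^ k) x = x" using LeastI_ex[OF rot_returns[OF x]] unfolding k_def by auto
  have kmin: "\<not> (0 < t \<and> (rot ^^ t) x = x)" if "t < k" for t
    using not_less_Least[of t "\<lambda>k. k > 0 \<and> (rot ^^ k) x = x"] that unfolding k_def by blast
  have path: "(x, \<alpha> ((rot ^^ t) x)) \<in> (steps_avoiding x)\<^sup>*" if "t < k" for t
    using that
  proof (induction t)
    case 0 then show ?case using x unfolding steps_avoiding_def by auto
  next
    case (Suc t)
    define z where "z = \<alpha> ((rot ^^ t) x)"
    have zN: "z \<in> N" unfolding z_def using \<alpha>_closed rot_pow_closed x by blast
    have "z \<noteq> x"
      using rot_pow_neq_\<alpha>[OF x, of t] \<alpha>_\<alpha> rot_pow_closed x unfolding z_def by metis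
    moreover have "z \<noteq> \<beta> x"
      using kmin[OF Suc.prems] \<beta>_\<beta> x unfolding z_def rot_def by fastforce
    ultimately have "(z, \<beta> z) \<in> steps_avoiding x" "(\<beta> z, \<alpha> (\<beta> z)) \<in> steps_avoiding x"
      using zN \<beta>_closed unfolding steps_avoiding_def by blast+
    moreover have "(x, z) \<in> (steps_avoiding x)\<^sup>*" using Suc unfolding z_def by simp
    ultimately have "(x, \<alpha> (\<beta> z)) \<in> (steps_avoiding x)\<^sup>*" by (meson rtrancl.rtrancl_into_rtrancl)
    moreover have "\<beta> z = (rot ^^ Suc t) x" unfolding z_def rot_def by simp
    ultimately show ?case by simp
  qed
  obtain t where t: "k = Suc t" using k(1) gr0_conv_Suc by blast
  have "\<beta> (\<alpha> ((rot ^^ t) x)) = x" using k(2) t unfolding rot_def by simp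
  then have "\<alpha> ((rot ^^ t) x) = \<beta> x" using \<beta>_\<beta> \<alpha>_closed rot_pow_closed x by metis
  then show ?thesis using path t by (metis lessI)
qed

end

lemma edges_a: "(p,q) \<in> a \<Longrightarrow> ((False,p),(False,q)) \<in> edges a b d S"
  unfolding edges_def by blast

lemma edges_d: "(p,q) \<in> d \<Longrightarrow> ((True,p),(True,q)) \<in> edges a b d S"
  unfolding edges_def by blast

lemma edges_b: "(p,q) \<in> b \<Longrightarrow> (p,q) \<notin> S \<Longrightarrow> ((s,p),(s,q)) \<in> edges a b d S"
  unfolding edges_def by (cases s) blast+

lemma edges_cut: "p \<in> arc_ends S \<Longrightarrow> ((False,p),(True,p)) \<in> edges a b d S"
  unfolding edges_def arc_ends_def by blast

lemma edges_remove_arc: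
  assumes "(i,j) \<in> b" "(i,j) \<notin> S"
  shows "edges a b d S = edges a (b - {(i,j)}) d S \<union> {((False,i),(False,j)),((True,i),(True,j))}"
    "edges a b d (insert (i,j) S) = edges a (b - {(i,j)}) d S \<union> {((False,i),(True,i)),((False,j),(True,j))}"
  using assms unfolding edges_def by auto

text \<open>Below the cup diagram \<open>a\<close> carries the cap diagram \<open>b\<close>, above it the cup diagram \<open>b\<close>
  carries the cap diagram \<open>d\<close>; all three have the same vertices \<open>P\<close>.\<close>
locale stacked_diagram =
  fixes a b d :: "(int \<times> int) set" and P :: "int set"
  assumes A: "arc_diagram a" and B: "arc_diagram b" and D: "arc_diagram d"
    and ends_a: "arc_ends a = P" and ends_b: "arc_ends b = P" and ends_d: "arc_ends d = P"
begin

lemma finite_P: "finite P"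
  using finite_arc_ends[OF A] ends_a by simp

definition outer_move :: "node \<Rightarrow> node" where
  "outer_move z = (fst z, partner (if fst z then d else a) (snd z))"

definition middle_move :: "(int \<times> int) set \<Rightarrow> node \<Rightarrow> node" where
  "middle_move S z = (if snd z \<in> arc_ends S then (\<not> fst z, snd z) else (fst z, partner b (snd z)))"

definition "nodes = (UNIV :: bool set) \<times> P"

lemma partner_uncut:
  assumes S: "S \<subseteq> b" and p: "p \<in> P" "p \<notin> arc_ends S"
  shows "partner b p \<notin> arc_ends S"
proof
  assume "partner b p \<in> arc_ends S"
  then obtain r where r: "(partner b p, r) \<in> S \<or> (r, partner b p) \<in> S" unfolding arc_ends_def by blast
  then have "(partner b p, r) \<in> b \<or> (r, partner b p) \<in> b" using S by blast
  then have "r = partner b (partner b p)" using partner_eqI[OF B] by metis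
  then have "r = p" using partner_partner[OF B] p ends_b by simp
  then show False using p(2) r unfolding arc_ends_def by blast
qed

lemma involution_pair_moves: assumes S: "S \<subseteq> b" shows "involution_pair nodes outer_move (middle_move S)"
proof
  show "finite nodes" unfolding nodes_def using finite_P by simp
  fix z assume z: "z \<in> nodes"
  then have p: "snd z \<in> P" unfolding nodes_def by auto
  have pa: "snd z \<in> arc_ends (if fst z then d else a)" using p ends_a ends_d by simp
  show "outer_move z \<in> nodes" unfolding outer_move_def nodes_def using partner_in_arc_ends[OF _ pa] A D ends_a ends_d
    by (cases "fst z") auto
  show "outer_move (outer_move z) = z" unfolding outer_move_def using partner_partner[OF _ pa] A D
    by (cases "fst z") (auto simp: prod_eq_iff)
  show "outer_move z \<noteq> z" unfolding outer_move_def using partner_neq[OF _ pa] A D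
    by (cases "fst z") (auto simp: prod_eq_iff)
  show "middle_move S z \<in> nodes" unfolding middle_move_def nodes_def using p partner_in_arc_ends[OF B] ends_b by auto
  show "middle_move S (middle_move S z) = z" unfolding middle_move_def
    using p partner_uncut[OF S p] partner_partner[OF B] ends_b by (auto simp: prod_eq_iff split: if_splits)
  show "middle_move S z \<noteq> z" unfolding middle_move_def using partner_neq[OF B] p ends_b by (auto simp: prod_eq_iff)
qed

text \<open>The diagram has no rays, so removing one copy of an uncut arc of \<open>b\<close> leaves the ends of
  the other copy connected.\<close>
lemma cut_arc_ends_connected:
  assumes S: "S \<subseteq> b" and e: "(i,j) \<in> b" "(i,j) \<notin> S"
  shows "conn (edges a (b - {(i,j)}) d S \<union> {((\<not>s,i),(\<not>s,j))}) (s,i) (s,j)"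
proof -
  interpret involution_pair nodes outer_move "middle_move S" using involution_pair_moves[OF S] .
  define E where "E = edges a (b - {(i,j)}) d S \<union> {((\<not>s,i),(\<not>s,j))}"
  have iP: "i \<in> P" using e ends_b unfolding arc_ends_def by blast
  have ij: "partner b i = j" using partner_eqI[OF B] e by blast
  have iS: "i \<notin> arc_ends S"
  proof
    assume "i \<in> arc_ends S"
    then obtain r where "(i,r) \<in> S \<or> (r,i) \<in> S" unfolding arc_ends_def by blast
    then have "partner b i = r" using S partner_eqI[OF B] by blast
    then have "(j,i) \<in> b" using \<open>(i,r) \<in> S \<or> (r,i) \<in> S\<close> ij e S by auto
    then show False using arc_less[OF B, of j i] arc_less[OF B, of i j] e(1) by linarith
  qed
  define x where "x = (s,i)"
  have xN: "x \<in> nodes" unfolding x_def nodes_def using iP by simp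
  have mx: "middle_move S x = (s,j)" unfolding x_def middle_move_def using iS ij by simp
  have step: "conn E z z'" if "(z,z') \<in> steps_avoiding x" for z z'
  proof -
    obtain s' p where z: "z = (s',p)" by force
    from that consider "z \<in> nodes" "z' = outer_move z"
      | "z \<in> nodes" "z \<noteq> x" "z \<noteq> middle_move S x" "z' = middle_move S z"
      unfolding steps_avoiding_def by blast
    then show ?thesis
    proof cases
      case 1
      then have p: "p \<in> P" using z unfolding nodes_def by auto
      have "(p, partner d p) \<in> d \<or> (partner d p, p) \<in> d" "(p, partner a p) \<in> a \<or> (partner a p, p) \<in> a"
        using partner_arc[OF D] partner_arc[OF A] p ends_a ends_d by auto
      then show ?thesis using 1 z unfolding outer_move_def E_def
        by (cases s') (auto intro: conn_edge conn_edge_rev edges_a edges_d)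
    next
      case 2
      then have p: "p \<in> P" using z unfolding nodes_def by auto
      show ?thesis
      proof (cases "p \<in> arc_ends S")
        case True
        then have "((False,p),(True,p)) \<in> E" unfolding E_def using edges_cut by blast
        moreover have "z' = (\<not> s', p)" using 2 z True unfolding middle_move_def by simp
        ultimately show ?thesis using z by (cases s') (auto intro: conn_edge conn_edge_rev)
      next
        case False
        define q where "q = partner b p"
        have z': "z' = (s', q)" using 2 z False unfolding middle_move_def q_def by simp
        have pq: "(p, q) \<in> b \<or> (q, p) \<in> b" using partner_arc[OF B] p ends_b unfolding q_def by simp
        have nS: "(p,q) \<notin> S" "(q,p) \<notin> S" using False unfolding arc_ends_def by blast+
        show ?thesis
        proof (cases "(p,q) = (i,j) \<or> (q,p) = (i,j)")
          case True
          then have "s' = (\<not> s)" using 2 mx z unfolding x_def by auto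
          then show ?thesis using True z z' unfolding E_def by (auto intro: conn_edge conn_edge_rev)
        next
          case False
          then have "((s',p),(s',q)) \<in> E \<or> ((s',q),(s',p)) \<in> E"
            using pq nS unfolding E_def by (meson DiffI UnI1 edges_b singletonD)
          then show ?thesis using z z' by (auto intro: conn_edge conn_edge_rev)
        qed
      qed
    qed
  qed
  have "(x, middle_move S x) \<in> (steps_avoiding x)\<^sup>*" using \<beta>_reachable_avoiding[OF xN] .
  then have "conn E x (middle_move S x)"
    by (induction rule: rtrancl_induct) (auto intro: conn_trans step)
  then show ?thesis unfolding mx unfolding E_def x_def .
qed

text \<open>If the cap \<open>(i,j)\<close> and its mirror cup lie on different circles, each of them is
  a proper part of its circle.\<close>
lemma cut_arc_ends_connected_apart:
  assumes S: "S \<subseteq> b" and e: "(i,j) \<in> b" "(i,j) \<notin> S"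
    and apart: "\<not> conn (edges a b d S) (False,i) (True,i)"
  shows "conn (edges a (b - {(i,j)}) d S) (s,i) (s,j)"
proof (rule conn_drop_unreached[OF cut_arc_ends_connected[OF S e, of s]])
  fix p q assume pq: "(p,q) \<in> {((\<not>s,i),(\<not>s,j))}"
    and c: "conn (edges a (b - {(i,j)}) d S \<union> {((\<not>s,i),(\<not>s,j))}) (s,i) p"
  have "edges a (b - {(i,j)}) d S \<union> {((\<not>s,i),(\<not>s,j))} \<subseteq> edges a b d S"
    using edges_remove_arc(1)[OF e] by (cases s) auto
  then have "conn (edges a b d S) (s,i) (\<not>s,i)" using conn_mono[OF c] pq by auto
  then show False using apart conn_sym by (cases s) auto
qed

lemma surg_step_potential_le:
  assumes S: "S \<subseteq> b" and e: "(i,j) \<in> b" "(i,j) \<notin> S" and X: "arc_diagram X"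
    and L: "constant_on_components (edges a b d S) L" and L1: "L1 \<in> set (surg_step a b d S L (i,j))"
  shows "constant_on_components (edges a b d (insert (i,j) S)) L1 \<and>
    down_potential s (edges a b d (insert (i,j) S)) L1 X v \<le> down_potential s (edges a b d S) L X v"
proof -
  interpret edge_swap "edges a (b - {(i,j)}) d S" "(False,i)" "(True,i)" "(False,j)" "(True,j)" .
  have arcs: "E_arcs = edges a b d S" unfolding E_arcs_def using edges_remove_arc(1)[OF e] by simp
  have segs: "E_segs = edges a b d (insert (i,j) S)" unfolding E_segs_def using edges_remove_arc(2)[OF e] by simp
  define relab where "relab = (\<lambda>\<alpha> \<beta> x. if conn E_segs (False,i) x then \<alpha>
       else if conn E_segs (False,j) x then \<beta> else L x)"
  have step_eq: "surg_step a b d S L (i,j) = (if \<not> conn E_arcs (False,i) (True,i) then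
      (if \<not> L (False,i) \<and> \<not> L (True,i) then []
       else [\<lambda>x. if conn E_segs (False,i) x then L (False,i) \<and> L (True,i) else L x])
     else (if L (False,i) then [relab True False, relab False True] else [relab False False]))"
    unfolding surg_step_def Let_def arcs[symmetric] segs[symmetric] relab_def by simp
  have L0: "constant_on_components E_arcs L" using L arcs by simp
  show ?thesis
  proof (cases "conn E_arcs (False,i) (True,i)")
    case False
    have u1w1: "conn (edges a (b - {(i,j)}) d S) (False,i) (False,j)"
      and u2w2: "conn (edges a (b - {(i,j)}) d S) (True,i) (True,j)"
      using cut_arc_ends_connected_apart[OF S e] False arcs by simp_all
    have lab: "L (False,i) \<or> L (True,i)"
    proof (rule ccontr)
      assume "\<not> (L (False,i) \<or> L (True,i))"
      then show False using L1 step_eq False by simp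
    qed
    then have "surg_step a b d S L (i,j) = [\<lambda>x. if conn E_segs (False,i) x then L (False,i) \<and> L (True,i) else L x]"
      using step_eq False by simp
    then have L1_eq: "L1 = (\<lambda>x. if conn E_segs (False,i) x then L (False,i) \<and> L (True,i) else L x)"
      using L1 by simp
    have "constant_on_components E_segs L1"
      unfolding L1_eq using merge_labels_constant[OF u1w1 u2w2 L0] .
    moreover have "down_potential s E_segs L1 X v \<le> down_potential s E_arcs L X v"
      unfolding L1_eq using down_potential_merge[OF X u1w1 u2w2 False L0 lab] .
    ultimately show ?thesis using arcs segs by simp
  next
    case True
    have "\<exists>\<alpha> \<beta>. L1 = relab \<alpha> \<beta> \<and> (if L (False,i) then \<alpha> \<noteq> \<beta> else \<not> \<alpha> \<and> \<not> \<beta>)"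
    proof (cases "L (False,i)")
      case True
      then have "L1 = relab True False \<or> L1 = relab False True"
        using L1 step_eq \<open>conn E_arcs (False,i) (True,i)\<close> by simp
      then show ?thesis
        using True by (elim disjE) (intro exI[of _ True] exI[of _ False], simp,
          intro exI[of _ False] exI[of _ True], simp)
    next
      case False
      then have "L1 = relab False False" using L1 step_eq \<open>conn E_arcs (False,i) (True,i)\<close> by simp
      then show ?thesis using False by (intro exI[of _ False] exI[of _ False]) simp
    qed
    then obtain \<alpha> \<beta> where L1_eq: "L1 = relab \<alpha> \<beta>"
      and lab: "if L (False,i) then \<alpha> \<noteq> \<beta> else \<not> \<alpha> \<and> \<not> \<beta>" by blast
    have L1_split: "L1 = (\<lambda>x. if conn E_segs (False,i) x then \<alpha> else if conn E_segs (False,j) x then \<beta> else L x)"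
      unfolding L1_eq relab_def ..
    have "constant_on_components E_segs L1" unfolding L1_split using split_labels_constant[OF True L0] .
    moreover have "down_potential s E_segs L1 X v \<le> down_potential s E_arcs L X v"
      unfolding L1_split using down_potential_split[OF X True L0 lab] .
    ultimately show ?thesis using arcs segs by simp
  qed
qed

lemma surg_potential_le:
  assumes "S \<subseteq> b" "set es \<subseteq> b - S" "distinct es" "arc_diagram X"
    "constant_on_components (edges a b d S) L" "L' \<in> set (surg a b d S L es)"
  shows "constant_on_components (edges a b d (S \<union> set es)) L' \<and>
    down_potential s (edges a b d (S \<union> set es)) L' X v \<le> down_potential s (edges a b d S) L X v"
  using assms
proof (induction es arbitrary: S L)
  case (Cons e es)
  obtain i j where e: "e = (i,j)" by force
  from Cons.prems(6) obtain L1 where L1: "L1 \<in> set (surg_step a b d S L e)"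
    and L': "L' \<in> set (surg a b d (insert e S) L1 es)" by auto
  have step: "constant_on_components (edges a b d (insert e S)) L1 \<and>
    down_potential s (edges a b d (insert e S)) L1 X v \<le> down_potential s (edges a b d S) L X v"
    using surg_step_potential_le[OF Cons.prems(1) _ _ Cons.prems(4,5)] L1 Cons.prems(2) e by auto
  have "constant_on_components (edges a b d (insert e S \<union> set es)) L' \<and>
    down_potential s (edges a b d (insert e S \<union> set es)) L' X v
      \<le> down_potential s (edges a b d (insert e S)) L1 X v"
    using Cons.IH[of "insert e S" L1] Cons.prems step L' by auto
  moreover have "insert e S \<union> set es = S \<union> set (e # es)" by auto
  ultimately show ?case using step by auto
qed simp

end

section \<open>Orientations of circles and nesting depth\<close>

definition arc_rel :: "(int \<times> int) set \<Rightarrow> (int \<times> int) set" where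
  "arc_rel M = {(p,q). (p,q) \<in> M \<or> (q,p) \<in> M}"

definition arc_class :: "(int \<times> int) set \<Rightarrow> int \<Rightarrow> int set" where
  "arc_class M x = {y. (x,y) \<in> (arc_rel M)\<^sup>*}"

definition nesting_count :: "(int \<times> int) set \<Rightarrow> int set \<Rightarrow> int \<Rightarrow> nat" where
  "nesting_count X C t = card {e\<in>X. fst e \<in> C \<and> fst e < t \<and> t \<le> snd e}"

lemma arc_class_self: "x \<in> arc_class M x"
  unfolding arc_class_def by simp

lemma arc_class_step: "y \<in> arc_class M x \<Longrightarrow> (y,z) \<in> arc_rel M \<Longrightarrow> z \<in> arc_class M x"
  unfolding arc_class_def by (meson mem_Collect_eq rtrancl.rtrancl_into_rtrancl)

lemma arc_class_closed: "(p,q) \<in> M \<Longrightarrow> p \<in> arc_class M x \<longleftrightarrow> q \<in> arc_class M x"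
  using arc_class_step unfolding arc_rel_def by blast

lemma arc_class_eq: "y \<in> arc_class M x \<Longrightarrow> arc_class M y = arc_class M x"
proof -
  assume "y \<in> arc_class M x"
  then have "(x,y) \<in> (arc_rel M)\<^sup>*" "(y,x) \<in> ((arc_rel M)\<inverse>)\<^sup>*"
    unfolding arc_class_def by (simp_all add: rtrancl_converse)
  moreover have "(arc_rel M)\<inverse> = arc_rel M" unfolding arc_rel_def by auto
  ultimately show ?thesis unfolding arc_class_def by (metis rtrancl_trans)
qed

lemma arc_class_subset:
  assumes "x \<in> arc_ends M" shows "arc_class M x \<subseteq> arc_ends M"
proof
  fix y assume "y \<in> arc_class M x"
  then have "(x,y) \<in> (arc_rel M)\<^sup>*" unfolding arc_class_def by simp
  then show "y \<in> arc_ends M"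
    by (induction rule: rtrancl_induct) (use assms in \<open>auto simp: arc_rel_def arc_ends_def\<close>)
qed

lemma int_card_filter_eq_sum: "finite A \<Longrightarrow> int (card {e\<in>A. Q e}) = (\<Sum>e\<in>A. of_bool (Q e))"
  by (simp add: Int_def conj_commute)

text \<open>Moving \<open>t\<close> from \<open>x\<close> to \<open>y\<close> changes the nesting count by the number of left ends minus the
  number of right ends in \<open>[x, y)\<close>, which has the parity of their sum \<open>card (C \<inter> {x..<y})\<close>.\<close>
lemma nesting_count_parity_change:
  assumes X: "arc_diagram X" and CX: "C \<subseteq> arc_ends X"
    and closed: "\<And>p q. (p,q) \<in> X \<Longrightarrow> p \<in> C \<longleftrightarrow> q \<in> C" and xy: "x < y"
  shows "(odd (nesting_count X C x) \<noteq> odd (nesting_count X C y)) = odd (card (C \<inter> {x..<y}))"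
proof -
  define A where "A = {e\<in>X. fst e \<in> C}"
  have finA: "finite A" unfolding A_def using arc_diagram_finite[OF X] by simp
  have lt: "fst e < snd e" if "e \<in> A" for e using arc_fst_less_snd[OF X] that unfolding A_def by auto
  have inj: "inj_on fst A" "inj_on snd A"
    by (auto intro!: inj_onI dest: arc_diagram_arcD(2,4)[OF X] simp: A_def)
  have fst_snd: "fst e \<noteq> snd e'" if "e \<in> A" "e' \<in> A" for e e'
    using arc_diagram_arcD(3)[OF X, of e e'] lt[OF that(1)] that unfolding A_def by (cases "e = e'") auto
  have C: "C = fst ` A \<union> snd ` A"
  proof (intro set_eqI iffI)
    fix z assume z: "z \<in> C"
    then obtain q where "(z,q) \<in> X \<or> (q,z) \<in> X" using CX unfolding arc_ends_def by blast
    then have "(z,q) \<in> A \<or> (q,z) \<in> A" using z closed unfolding A_def by auto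
    then show "z \<in> fst ` A \<union> snd ` A" by force
  qed (use closed in \<open>force simp: A_def\<close>)
  define I where "I = {x..<y}"
  define F where "F = (\<Sum>e\<in>A. (of_bool (fst e \<in> I) :: int))"
  define G where "G = (\<Sum>e\<in>A. (of_bool (snd e \<in> I) :: int))"
  have N: "int (nesting_count X C t) = (\<Sum>e\<in>A. of_bool (fst e < t \<and> t \<le> snd e))" for t
  proof -
    have "{e\<in>X. fst e \<in> C \<and> fst e < t \<and> t \<le> snd e} = {e\<in>A. fst e < t \<and> t \<le> snd e}"
      unfolding A_def by auto
    then show ?thesis unfolding nesting_count_def using int_card_filter_eq_sum[OF finA] by simp
  qed
  have "int (nesting_count X C y) - int (nesting_count X C x) = F - G"
    unfolding N F_def G_def sum_subtractf[symmetric]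
  proof (intro sum.cong refl)
    fix e assume "e \<in> A"
    then show "of_bool (fst e < y \<and> y \<le> snd e) - of_bool (fst e < x \<and> x \<le> snd e)
        = (of_bool (fst e \<in> I) - of_bool (snd e \<in> I) :: int)"
      using lt[of e] xy unfolding I_def by auto
  qed
  moreover have "int (card (C \<inter> I)) = F + G"
  proof -
    have "card (C \<inter> I) = card (fst ` {e\<in>A. fst e \<in> I}) + card (snd ` {e\<in>A. snd e \<in> I})"
    proof -
      have "C \<inter> I = fst ` {e\<in>A. fst e \<in> I} \<union> snd ` {e\<in>A. snd e \<in> I}" using C by blast
      moreover have "fst ` {e\<in>A. fst e \<in> I} \<inter> snd ` {e\<in>A. snd e \<in> I} = {}" using fst_snd by fastforce
      ultimately show ?thesis using finA by (simp add: card_Un_disjoint)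
    qed
    moreover have "card (fst ` {e\<in>A. fst e \<in> I}) = card {e\<in>A. fst e \<in> I}"
      "card (snd ` {e\<in>A. snd e \<in> I}) = card {e\<in>A. snd e \<in> I}"
      using inj by (auto intro: card_image inj_on_subset)
    ultimately show ?thesis unfolding F_def G_def using int_card_filter_eq_sum[OF finA] by simp
  qed
  ultimately show ?thesis unfolding I_def by presburger
qed

text \<open>The vertices of a circle strictly inside one of its arcs are paired up by the arcs of
  the same diagram, which cannot cross it.\<close>
lemma even_card_inside_arc:
  assumes M: "arc_diagram M" and CM: "C \<subseteq> arc_ends M"
    and closed: "\<And>p q. (p,q) \<in> M \<Longrightarrow> p \<in> C \<longleftrightarrow> q \<in> C" and xy: "(x,y) \<in> M"
  shows "even (card (C \<inter> {x<..<y}))"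
proof -
  define M' where "M' = {e\<in>M. x < fst e \<and> snd e < y \<and> fst e \<in> C}"
  have lt: "fst e < snd e" if "e \<in> M'" for e using arc_fst_less_snd[OF M] that unfolding M'_def by auto
  have inj: "inj_on fst M'" "inj_on snd M'"
    by (auto intro!: inj_onI dest: arc_diagram_arcD(2,4)[OF M] simp: M'_def)
  have fst_snd: "fst e \<noteq> snd e'" if "e \<in> M'" "e' \<in> M'" for e e'
    using arc_diagram_arcD(3)[OF M, of e e'] lt[OF that(1)] that unfolding M'_def by (cases "e = e'") auto
  have inside: "C \<inter> {x<..<y} = fst ` M' \<union> snd ` M'"
  proof (intro set_eqI iffI)
    fix z assume z: "z \<in> C \<inter> {x<..<y}"
    then obtain q where q: "(z,q) \<in> M \<or> (q,z) \<in> M" using CM unfolding arc_ends_def by blast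
    then have ne: "(x,y) \<noteq> (z,q)" "(x,y) \<noteq> (q,z)" using z by auto
    have "x < q \<and> q < y"
      using q
    proof
      assume zq: "(z,q) \<in> M"
      then have "q \<noteq> y" "\<not> (x < z \<and> z < y \<and> y < q)"
        using arc_ends_disjoint[OF M xy zq ne(1)] arc_diagram_arcD(6)[OF M xy zq] ne(1) by auto
      then show ?thesis using z arc_less[OF M zq] by auto
    next
      assume qz: "(q,z) \<in> M"
      then have "q \<noteq> x" "\<not> (q < x \<and> x < z \<and> z < y)"
        using arc_ends_disjoint[OF M xy qz ne(2)] arc_diagram_arcD(6)[OF M qz xy] ne(2) by auto
      then show ?thesis using z arc_less[OF M qz] by auto
    qed
    then have "(z,q) \<in> M' \<or> (q,z) \<in> M'" using q z closed unfolding M'_def by auto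
    then show "z \<in> fst ` M' \<union> snd ` M'" by force
  next
    fix z assume "z \<in> fst ` M' \<union> snd ` M'"
    then obtain e where e: "e \<in> M'" "z = fst e \<or> z = snd e" by blast
    then show "z \<in> C \<inter> {x<..<y}" using lt[OF e(1)] closed[of "fst e" "snd e"] unfolding M'_def by auto
  qed
  have "fst ` M' \<inter> snd ` M' = {}" using fst_snd by fastforce
  moreover have "finite M'" unfolding M'_def using arc_diagram_finite[OF M] by simp
  ultimately have "card (C \<inter> {x<..<y}) = 2 * card M'" unfolding inside
    using inj by (simp add: card_Un_disjoint card_image)
  then show ?thesis by simp
qed

lemma nesting_count_parity_flips:
  assumes X: "arc_diagram X" and M: "arc_diagram M"
    and CX: "C \<subseteq> arc_ends X" and CM: "C \<subseteq> arc_ends M"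
    and clX: "\<And>p q. (p,q) \<in> X \<Longrightarrow> p \<in> C \<longleftrightarrow> q \<in> C"
    and clM: "\<And>p q. (p,q) \<in> M \<Longrightarrow> p \<in> C \<longleftrightarrow> q \<in> C"
    and xy: "(x,y) \<in> M" and xC: "x \<in> C"
  shows "odd (nesting_count X C x) \<noteq> odd (nesting_count X C y)"
proof -
  have "x < y" using arc_less[OF M xy] .
  then have "C \<inter> {x..<y} = insert x (C \<inter> {x<..<y})" using xC by auto
  moreover have "finite (C \<inter> {x<..<y})" by simp
  ultimately have "odd (card (C \<inter> {x..<y}))" using even_card_inside_arc[OF M CM clM xy] by simp
  then show ?thesis using nesting_count_parity_change[OF X CX clX \<open>x < y\<close>] by simp
qed

lemma arc_ends_Un: "arc_ends (X \<union> M) = arc_ends X \<union> arc_ends M"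
  unfolding arc_ends_def by blast

lemma nesting_parity_flips_in_class:
  assumes X: "arc_diagram X" and M: "arc_diagram M" and ends: "arc_ends X = P" "arc_ends M = P"
    and p: "p \<in> P" and xy: "(x,y) \<in> X \<or> (x,y) \<in> M" and x: "x \<in> arc_class (X \<union> M) p"
  shows "odd (nesting_count X (arc_class (X \<union> M) p) x) \<noteq> odd (nesting_count X (arc_class (X \<union> M) p) y)"
proof -
  let ?C = "arc_class (X \<union> M) p"
  have C: "?C \<subseteq> arc_ends X" "?C \<subseteq> arc_ends M"
    using arc_class_subset[of p "X \<union> M"] p ends unfolding arc_ends_Un by auto
  have "\<And>p q. (p,q) \<in> X \<Longrightarrow> p \<in> ?C \<longleftrightarrow> q \<in> ?C" "\<And>p q. (p,q) \<in> M \<Longrightarrow> p \<in> ?C \<longleftrightarrow> q \<in> ?C"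
    using arc_class_closed[of _ _ "X \<union> M"] by blast+
  then show ?thesis
    using xy nesting_count_parity_flips[OF X X C(1) C(1)] nesting_count_parity_flips[OF X M C] x by blast
qed

text \<open>Along a circle the orientation alternates and so does the parity of the nesting depth
  of a vertex; hence an orientation is determined by that of the leftmost vertex of each
  circle, where the nesting depth is \<open>0\<close>.\<close>
lemma down_iff_nesting_parity:
  assumes X: "arc_diagram X" and M: "arc_diagram M" and ends: "arc_ends X = P" "arc_ends M = P"
    and finP: "finite P" and x: "x \<in> P" and wX: "arcs_alternate X w" and wM: "arcs_alternate M w"
  shows "(w x = Some Down)
    \<longleftrightarrow> (w (Min (arc_class (X \<union> M) x)) = Some Down) \<noteq> odd (nesting_count X (arc_class (X \<union> M) x) x)"
proof -
  define C where "C = arc_class (X \<union> M) x"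
  have "C \<subseteq> P" using arc_class_subset[of x "X \<union> M"] x ends unfolding C_def arc_ends_Un by auto
  then have finC: "finite C" using finite_subset finP by blast
  define m where "m = Min C"
  have mC: "m \<in> C" using finC arc_class_self[of x] Min_in unfolding C_def m_def by blast
  have m0: "nesting_count X C m = 0"
    using Min_le[OF finC] unfolding m_def nesting_count_def by (force simp: card_eq_0_iff)
  have alt: "(w y = Some Down) \<noteq> odd (nesting_count X C y) \<longleftrightarrow> (w x = Some Down) \<noteq> odd (nesting_count X C x)"
    if "y \<in> C" for y
  proof -
    have "(x, y) \<in> (arc_rel (X \<union> M))\<^sup>*" using that unfolding C_def arc_class_def by simp
    then show ?thesis
    proof (induction rule: rtrancl_induct)
      case (step y z)
      have yC: "y \<in> C" using step.hyps(1) unfolding C_def arc_class_def by simp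
      then have zC: "z \<in> C" using arc_class_step[OF _ step.hyps(2)] unfolding C_def by simp
      from step.hyps(2) have "(y,z) \<in> X \<union> M \<or> (z,y) \<in> X \<union> M" unfolding arc_rel_def by simp
      then have "(w y = Some Down) \<noteq> (w z = Some Down) \<and> odd (nesting_count X C y) \<noteq> odd (nesting_count X C z)"
        using nesting_parity_flips_in_class[OF X M ends x] yC zC arcs_alternateD[OF wX] arcs_alternateD[OF wM]
        unfolding C_def by blast
      then show ?case using step.IH by blast
    qed simp
  qed
  have "(w m = Some Down) \<longleftrightarrow> (w x = Some Down) \<noteq> odd (nesting_count X C x)"
    using alt[OF mC] m0 by simp
  then show ?thesis unfolding C_def[symmetric] m_def[symmetric] by blast
qed

lemma left_down_iff_weight:
  assumes X: "arc_diagram X" and M: "arc_diagram M" and ends: "arc_ends X = P" "arc_ends M = P"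
    and finP: "finite P" and wX: "arcs_alternate X w" and wM: "arcs_alternate M w"
    and conn: "\<And>p q. p \<in> P \<Longrightarrow> conn E (s,p) (s,q) \<longleftrightarrow> q \<in> arc_class (X \<union> M) p"
    and L: "\<And>p. p \<in> P \<Longrightarrow> L (s,p) \<longleftrightarrow> w (Min (arc_class (X \<union> M) p)) = Some Down"
    and e: "e \<in> X"
  shows "left_down s E L X e \<longleftrightarrow> w (fst e) = Some Down"
proof -
  have p: "fst e \<in> P" using e ends unfolding arc_ends_def by (metis (mono_tags, lifting) mem_Collect_eq prod.collapse)
  define C where "C = arc_class (X \<union> M) (fst e)"
  have "{e'\<in>X. encloses e' e \<and> conn E (s, fst e) (s, fst e')} = {e'\<in>X. fst e' \<in> C \<and> fst e' < fst e \<and> fst e \<le> snd e'}"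
  proof (intro set_eqI iffI)
    fix e' assume "e' \<in> {e'\<in>X. encloses e' e \<and> conn E (s, fst e) (s, fst e')}"
    then show "e' \<in> {e'\<in>X. fst e' \<in> C \<and> fst e' < fst e \<and> fst e \<le> snd e'}"
      using conn[OF p] arc_fst_less_snd[OF X e] unfolding C_def encloses_def by auto
  next
    fix e' assume h: "e' \<in> {e'\<in>X. fst e' \<in> C \<and> fst e' < fst e \<and> fst e \<le> snd e'}"
    then have "e' \<noteq> e" by auto
    note f = arc_diagram_arcD[OF X _ e this]
    have "fst e < snd e'" using f h by fastforce
    then have "snd e < snd e'" using f h by fastforce
    then show "e' \<in> {e'\<in>X. encloses e' e \<and> conn E (s, fst e) (s, fst e')}"
      using h conn[OF p] unfolding C_def encloses_def by auto
  qed
  then have "left_down s E L X e \<longleftrightarrow> L (s, fst e) \<noteq> odd (nesting_count X C (fst e))"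
    unfolding left_down_def nesting_count_def by simp
  also have "\<dots> \<longleftrightarrow> w (fst e) = Some Down"
    using down_iff_nesting_parity[OF X M ends finP p wX wM] L[OF p] unfolding C_def by simp
  finally show ?thesis .
qed

section \<open>The initial and the final diagram\<close>

context stacked_diagram
begin

lemma arc_ends_Un_P: "arc_ends (a \<union> b) = P" "arc_ends (d \<union> b) = P" "arc_ends (a \<union> d) = P"
  using ends_a ends_b ends_d unfolding arc_ends_Un by auto

lemma finite_arc_class: "p \<in> P \<Longrightarrow> arc_ends M = P \<Longrightarrow> finite (arc_class M p)"
  using arc_class_subset[of p M] finite_subset[OF _ finite_P] by simp

lemma Min_arc_class: "p \<in> P \<Longrightarrow> arc_ends M = P \<Longrightarrow> Min (arc_class M p) \<in> arc_class M p"
  using finite_arc_class arc_class_self Min_in by blast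

lemma conn_initial:
  "conn (edges a b d {}) x y \<Longrightarrow> fst y = fst x \<and> snd y \<in> arc_class (if fst x then d \<union> b else a \<union> b) (snd x)"
proof (induction rule: conn_induct)
  case (step z z')
  have "fst z' = fst z" "(snd z, snd z') \<in> arc_rel (if fst z then d \<union> b else a \<union> b)"
    using step.hyps(2) unfolding edges_def arc_rel_def by auto
  then show ?case using step.IH arc_class_step[of "snd z" _ "snd x" "snd z'"] by simp
qed (simp add: arc_class_self)

lemma conn_initial_iff:
  "conn (edges a b d {}) (s,p) (s,q) \<longleftrightarrow> q \<in> arc_class (if s then d \<union> b else a \<union> b) p"
proof
  assume "q \<in> arc_class (if s then d \<union> b else a \<union> b) p"
  then have "(p,q) \<in> (arc_rel (if s then d \<union> b else a \<union> b))\<^sup>*" unfolding arc_class_def by simp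
  then show "conn (edges a b d {}) (s,p) (s,q)"
  proof (induction rule: rtrancl_induct)
    case (step y z)
    have "((s,y),(s,z)) \<in> edges a b d {} \<or> ((s,z),(s,y)) \<in> edges a b d {}"
      using step.hyps(2) unfolding arc_rel_def edges_def by (cases s) auto
    then have "conn (edges a b d {}) (s,y) (s,z)" using conn_edge conn_edge_rev by blast
    then show ?case using conn_trans[OF step.IH] by blast
  qed simp
next
  assume "conn (edges a b d {}) (s,p) (s,q)"
  then show "q \<in> arc_class (if s then d \<union> b else a \<union> b) p" using conn_initial by fastforce
qed

lemma init_labels_constant: "constant_on_components (edges a b d {}) (init_labels a b d lam mu)"
  unfolding constant_on_components_def
proof (intro allI impI)
  fix x y assume c: "conn (edges a b d {}) x y"
  then show "init_labels a b d lam mu x = init_labels a b d lam mu y"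
    using conn_initial[OF c] conn_components_eq[OF c] unfolding init_labels_def Let_def by simp
qed

lemma init_labels_value: "init_labels a b d lam mu (s,p) =
  (if s then mu (Min (arc_class (d \<union> b) p)) = Some Down else lam (Min (arc_class (a \<union> b) p)) = Some Down)"
proof -
  have "snd ` {u. conn (edges a b d {}) (s,p) u} = arc_class (if s then d \<union> b else a \<union> b) p"
    using conn_initial[of "(s,p)"] conn_initial_iff by force
  then show ?thesis unfolding init_labels_def Let_def by (cases s) simp_all
qed

text \<open>After surgery on all of \<open>b\<close> the two lines are joined by vertical segments at every
  vertex, leaving the circle diagram \<open>a d\<close>.\<close>
lemma conn_final:
  "conn (edges a b d b) x y \<Longrightarrow> snd y \<in> arc_class (a \<union> d) (snd x)"
proof (induction rule: conn_induct)
  case (step z z')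
  then have "snd z' = snd z \<or> (snd z, snd z') \<in> arc_rel (a \<union> d)"
    unfolding edges_def arc_rel_def by auto
  then show ?case using step.IH arc_class_step[of "snd z" _ "snd x" "snd z'"] by auto
qed (simp add: arc_class_self)

lemma conn_vertical: "p \<in> P \<Longrightarrow> conn (edges a b d b) (s,p) (s',p)"
  using edges_cut[of p b a b d] conn_edge conn_edge_rev ends_b by (cases s; cases s') auto

lemma conn_final_iff:
  assumes p: "p \<in> P"
  shows "conn (edges a b d b) (s,p) (s',q) \<longleftrightarrow> q \<in> arc_class (a \<union> d) p"
proof
  assume "q \<in> arc_class (a \<union> d) p"
  then have "(p,q) \<in> (arc_rel (a \<union> d))\<^sup>*" unfolding arc_class_def by simp
  then have "\<forall>s'. conn (edges a b d b) (s,p) (s',q)"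
  proof (induction rule: rtrancl_induct)
    case base then show ?case using conn_vertical[OF p] by blast
  next
    case (step y z)
    have zP: "z \<in> P" using step.hyps(2) arc_ends_Un_P(3) unfolding arc_rel_def arc_ends_def by blast
    from step.hyps(2) have "conn (edges a b d b) (False,y) (False,z) \<or> conn (edges a b d b) (True,y) (True,z)"
      unfolding arc_rel_def by (auto intro: conn_edge conn_edge_rev edges_a edges_d)
    then show ?case using step.IH conn_trans[OF _ conn_trans[OF _ conn_vertical[OF zP]]] by blast
  qed
  then show "conn (edges a b d b) (s,p) (s',q)" by blast
next
  assume "conn (edges a b d b) (s,p) (s',q)"
  then show "q \<in> arc_class (a \<union> d) p" using conn_final by fastforce
qed

lemma components_final: "p \<in> P \<Longrightarrow> snd ` {u. conn (edges a b d b) (s,p) u} = arc_class (a \<union> d) p"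
  using conn_final[of "(s,p)"] conn_final_iff by force

text \<open>The conditions characterising \<open>final_weight a b d lam L\<close>, with the leftmost vertex of
  the circle through \<open>p\<close> expressed by arcs.\<close>
definition final_weight_spec :: "weight \<Rightarrow> (node \<Rightarrow> bool) \<Rightarrow> weight \<Rightarrow> bool" where
  "final_weight_spec lam L v \<longleftrightarrow>
     (\<forall>p. p \<notin> P \<longrightarrow> v p = lam p) \<and> (\<forall>p\<in>P. v p \<in> {Some Down, Some Up}) \<and>
     arc_oriented a v \<and> arc_oriented d v \<and>
     (\<forall>p\<in>P. p = Min (arc_class (a \<union> d) p) \<longrightarrow> (v p = Some Down \<longleftrightarrow> L (False, p)))"

lemma final_weight_eq_The:
  assumes "P = {p. lam p \<in> {Some Down, Some Up}}"
  shows "final_weight a b d lam L = (THE v. final_weight_spec lam L v)"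
  unfolding final_weight_def final_weight_spec_def
  using components_final[of _ False] by (intro arg_cong[where f=The] ext) (auto simp: assms)

lemma final_weight_spec_unique:
  assumes v: "final_weight_spec lam L v" and v': "final_weight_spec lam L v'"
  shows "v = v'"
proof
  fix p
  show "v p = v' p"
  proof (cases "p \<in> P")
    case True
    define m where "m = Min (arc_class (a \<union> d) p)"
    have m: "m \<in> P" "m = Min (arc_class (a \<union> d) m)"
      using Min_arc_class[OF True arc_ends_Un_P(3)] arc_class_eq arc_class_subset[of p "a \<union> d"]
        True arc_ends_Un_P(3) unfolding m_def by auto
    have "v p = Some Down \<longleftrightarrow> v' p = Some Down"
      using down_iff_nesting_parity[OF A D ends_a ends_d finite_P True] v v' m
      unfolding final_weight_spec_def m_def[symmetric] by (metis arc_oriented_alternate)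
    moreover have "v p \<in> {Some Down, Some Up}" "v' p \<in> {Some Down, Some Up}"
      using v v' True unfolding final_weight_spec_def by blast+
    ultimately show ?thesis by auto
  qed (use v v' in \<open>simp add: final_weight_spec_def\<close>)
qed

lemma final_weight_spec_exists:
  assumes P: "P = {p. lam p \<in> {Some Down, Some Up}}"
  shows "\<exists>v. final_weight_spec lam L v"
proof -
  define C where "C p = arc_class (a \<union> d) p" for p
  define sg where "sg p = odd (nesting_count a (C p) p)" for p
  define lab where "lab p = L (False, Min (C p))" for p
  define v where "v p = (if p \<in> P then Some (if lab p \<noteq> sg p then Down else Up) else lam p)" for p
  have alternate: "(v i = Some Down) \<noteq> (v j = Some Down)" and ij_P: "i \<in> P" "j \<in> P"
    if ij: "(i,j) \<in> a \<or> (i,j) \<in> d" for i j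
  proof -
    show iP: "i \<in> P" and "j \<in> P" using ij ends_a ends_d unfolding arc_ends_def by blast+
    have "j \<in> C i" using ij arc_class_closed[of i j "a \<union> d" i] arc_class_self unfolding C_def by blast
    then have "C j = C i" using arc_class_eq unfolding C_def by blast
    moreover have "sg i \<noteq> sg j"
      using nesting_parity_flips_in_class[OF A D ends_a ends_d iP ij] arc_class_self \<open>C j = C i\<close>
      unfolding sg_def C_def by metis
    ultimately show "(v i = Some Down) \<noteq> (v j = Some Down)"
      using iP \<open>j \<in> P\<close> unfolding v_def lab_def by auto
  qed
  have oriented: "arc_oriented M v" if M: "M = a \<or> M = d" and ends_M: "arc_ends M = P" for M
    unfolding arc_oriented_def
  proof (intro conjI ballI allI impI)
    fix e assume "e \<in> M"
    then obtain i j where e: "e = (i,j)" and ij: "(i,j) \<in> a \<or> (i,j) \<in> d" using M by (cases e) auto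
    have "v i \<in> {Some Down, Some Up}" "v j \<in> {Some Down, Some Up}"
      using ij_P[OF ij] unfolding v_def by auto
    then show "case e of (i, j) \<Rightarrow> {v i, v j} = {Some Down, Some Up}"
      using alternate[OF ij] unfolding e by auto
  next
    fix p assume "v p \<in> {Some Down, Some Up}"
    then have "p \<in> P" using P unfolding v_def by (auto split: if_splits)
    then show "\<exists>(i, j)\<in>M. p = i \<or> p = j" using ends_M unfolding arc_ends_def by blast
  qed
  have "final_weight_spec lam L v"
    unfolding final_weight_spec_def
  proof (intro conjI allI impI ballI)
    show "arc_oriented a v" "arc_oriented d v" using oriented ends_a ends_d by blast+
  next
    fix p assume p: "p \<in> P" "p = Min (arc_class (a \<union> d) p)"
    then have "nesting_count a (C p) p = 0"
      using Min_le[OF finite_arc_class[OF p(1) arc_ends_Un_P(3)]]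
      unfolding nesting_count_def C_def by (force simp: card_eq_0_iff)
    then show "v p = Some Down \<longleftrightarrow> L (False, p)" using p unfolding v_def sg_def lab_def C_def by simp
  qed (simp_all add: v_def)
  then show ?thesis by blast
qed

lemma final_weight_spec_final_weight:
  assumes "P = {p. lam p \<in> {Some Down, Some Up}}"
  shows "final_weight_spec lam L (final_weight a b d lam L)"
  using final_weight_eq_The[OF assms] final_weight_spec_exists[OF assms] final_weight_spec_unique
  by (metis theI)

lemma final_labels:
  assumes L: "constant_on_components (edges a b d b) L" and v: "final_weight_spec lam L v" and p: "p \<in> P"
  shows "L (s,p) \<longleftrightarrow> v (Min (arc_class (a \<union> d) p)) = Some Down"
proof -
  define m where "m = Min (arc_class (a \<union> d) p)"
  have mC: "m \<in> arc_class (a \<union> d) p" using Min_arc_class[OF p arc_ends_Un_P(3)] unfolding m_def .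
  then have m: "m \<in> P" "m = Min (arc_class (a \<union> d) m)"
    using arc_class_subset[of p "a \<union> d"] p arc_ends_Un_P(3) arc_class_eq unfolding m_def by auto
  have "conn (edges a b d b) (s,p) (False, m)" using conn_final_iff[OF p] mC by blast
  then have "L (s,p) \<longleftrightarrow> L (False, m)" using L unfolding constant_on_components_def by blast
  also have "\<dots> \<longleftrightarrow> v m = Some Down" using v m unfolding final_weight_spec_def by auto
  finally show ?thesis unfolding m_def .
qed

end

section \<open>Counting vees and the Bruhat order\<close>

definition downs_below :: "weight \<Rightarrow> int \<Rightarrow> nat" where
  "downs_below w v = card {p. p < v \<and> w p = Some Down}"

definition down_measure :: "int set \<Rightarrow> weight \<Rightarrow> nat" where
  "down_measure P w = (\<Sum>p\<in>{p\<in>P. w p = Some Down}. nat (Max P - p))"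

locale dominated =
  fixes P :: "int set" and w1 w2 :: weight
  assumes finite_P: "finite P"
    and support1: "\<And>p. w1 p \<in> {Some Down, Some Up} \<longleftrightarrow> p \<in> P"
    and support2: "\<And>p. w2 p \<in> {Some Down, Some Up} \<longleftrightarrow> p \<in> P"
    and agree: "\<And>p. p \<notin> P \<Longrightarrow> w1 p = w2 p"
    and below: "\<And>v. downs_below w2 v \<le> downs_below w1 v"
    and total: "card {p. w1 p = Some Down} = card {p. w2 p = Some Down}"
begin

lemma finite_downs: "finite {p. Q p \<and> w p = Some Down}" if "w = w1 \<or> w = w2"
  using that support1 support2 by (intro finite_subset[OF _ finite_P]) blast

lemma first_difference:
  assumes "w1 \<noteq> w2"
  obtains i where "i \<in> P" "w1 i = Some Down" "w2 i = Some Up" "\<And>p. p < i \<Longrightarrow> w1 p = w2 p"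
proof -
  define Df where "Df = {p. w1 p \<noteq> w2 p}"
  have "Df \<subseteq> P" unfolding Df_def using agree by blast
  then have finDf: "finite Df" using finite_subset finite_P by blast
  have "Df \<noteq> {}" using assms unfolding Df_def by auto
  define i where "i = Min Df"
  have iDf: "i \<in> Df" unfolding i_def using Min_in[OF finDf \<open>Df \<noteq> {}\<close>] .
  then have iP: "i \<in> P" using \<open>Df \<subseteq> P\<close> by blast
  have eq: "w1 p = w2 p" if "p < i" for p using Min_le[OF finDf] that unfolding i_def Df_def by force
  define A where "A = {p. p < i \<and> w1 p = Some Down}"
  have finA: "finite A" using finite_downs[of w1 "\<lambda>p. p < i"] unfolding A_def by simp
  have count: "downs_below w (i + 1) = card A + (if w i = Some Down then 1 else 0)"
    if "w = w1 \<or> w = w2" for w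
  proof -
    have "{p. p < i \<and> w p = Some Down} = A" using that eq unfolding A_def by (cases "w = w1") auto
    moreover have "{p. p < i + 1 \<and> w p = Some Down} = {p. p < i \<and> w p = Some Down} \<union> {p. p = i \<and> w p = Some Down}"
      by auto
    ultimately have "{p. p < i + 1 \<and> w p = Some Down} = (if w i = Some Down then insert i A else A)"
      by auto
    then show ?thesis unfolding downs_below_def using finA by (simp add: A_def)
  qed
  have "w2 i = Some Down \<Longrightarrow> w1 i = Some Down"
    using below[of "i + 1"] count[of w1] count[of w2] by (cases "w1 i = Some Down") simp_all
  moreover have "w1 i \<noteq> w2 i" using iDf unfolding Df_def by simp
  moreover have "w1 i \<in> {Some Down, Some Up}" "w2 i \<in> {Some Down, Some Up}" using support1 support2 iP by auto
  ultimately show ?thesis using that iP eq by auto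
qed

lemma card_downs_below_le:
  assumes i: "w2 i = Some Up" "\<And>p. p < i \<Longrightarrow> w1 p = w2 p"
  shows "card {p. p < v \<and> w2 p = Some Down}
    \<le> card {p. p < i \<and> w1 p = Some Down} + card {p\<in>P. i < p \<and> p < v}"
proof -
  let ?A = "{p. p < i \<and> w1 p = Some Down}" and ?B = "{p\<in>P. i < p \<and> p < v}"
  have "{p. p < v \<and> w2 p = Some Down} \<subseteq> ?A \<union> ?B"
  proof (intro subsetI)
    fix p assume p: "p \<in> {p. p < v \<and> w2 p = Some Down}"
    then have "p \<in> P" "p \<noteq> i" using support2[of p] i(1) by auto
    then show "p \<in> ?A \<union> ?B" using p i(2)[of p] by (cases "p < i") auto
  qed
  moreover have "finite (?A \<union> ?B)" using finite_downs[of w1 "\<lambda>p. p < i"] finite_P by simp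
  ultimately have "card {p. p < v \<and> w2 p = Some Down} \<le> card (?A \<union> ?B)" by (rule card_mono[rotated])
  also have "\<dots> \<le> card ?A + card ?B" by (rule card_Un_le)
  finally show ?thesis .
qed

lemma up_after_first_difference:
  assumes i: "w1 i = Some Down" "w2 i = Some Up" "\<And>p. p < i \<Longrightarrow> w1 p = w2 p"
  shows "\<exists>j>i. w1 j = Some Up"
proof (rule ccontr)
  assume none: "\<not> ?thesis"
  define v where "v = Max P + 1"
  have below_v: "p < v" if "p \<in> P" for p using Max_ge[OF finite_P that] unfolding v_def by simp
  define A where "A = {p. p < i \<and> w1 p = Some Down}"
  define B where "B = {p\<in>P. i < p \<and> p < v}"
  have "{p. w1 p = Some Down} = A \<union> insert i B"
  proof (intro set_eqI iffI)
    fix p assume "p \<in> {p. w1 p = Some Down}"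
    then show "p \<in> A \<union> insert i B" using support1[of p] below_v unfolding A_def B_def by auto
  next
    fix p assume p: "p \<in> A \<union> insert i B"
    show "p \<in> {p. w1 p = Some Down}"
    proof (cases "i < p")
      case True
      then have "p \<in> P" using p unfolding A_def B_def by auto
      then show ?thesis using none True support1[of p] by auto
    qed (use p i(1) in \<open>auto simp: A_def B_def\<close>)
  qed
  moreover have "finite A" "finite B" "A \<inter> insert i B = {}" "i \<notin> B"
    using finite_downs[of w1 "\<lambda>p. p < i"] finite_P unfolding A_def B_def by auto
  ultimately have "card {p. w1 p = Some Down} = card A + Suc (card B)" by (simp add: card_Un_disjoint)
  moreover have "{p. w2 p = Some Down} = {p. p < v \<and> w2 p = Some Down}"
    using support2 below_v by auto
  ultimately show False
    using card_downs_below_le[OF i(2,3), of v] total unfolding A_def B_def by simp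
qed

lemma dominated_swap:
  assumes i: "w1 i = Some Down" "w2 i = Some Up" "\<And>p. p < i \<Longrightarrow> w1 p = w2 p"
    and j: "i < j" "w1 j = Some Up" and between: "\<And>p. p \<in> P \<Longrightarrow> i < p \<Longrightarrow> p < j \<Longrightarrow> w1 p = Some Down"
  shows "downs_below w2 v \<le> downs_below (w1(i := Some Up, j := Some Down)) v"
proof -
  let ?w = "w1(i := Some Up, j := Some Down)"
  define A where "A = {p. p < i \<and> w1 p = Some Down}"
  have fin: "finite {p. p < v \<and> w1 p = Some Down}" using finite_downs[of w1 "\<lambda>p. p < v"] by simp
  consider "v \<le> i" | "i < v" "v \<le> j" | "j < v" by linarith
  then show ?thesis
  proof cases
    case 1
    then have "{p. p < v \<and> ?w p = Some Down} = {p. p < v \<and> w1 p = Some Down}" using j by auto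
    then show ?thesis using below[of v] unfolding downs_below_def by simp
  next
    case 3
    let ?S = "{p. p < v \<and> w1 p = Some Down}"
    have iS: "i \<in> ?S" using i(1) j(1) 3 by simp
    have "{p. p < v \<and> ?w p = Some Down} = insert j (?S - {i})" using j 3 by auto
    then have "downs_below ?w v = Suc (card (?S - {i}))"
      unfolding downs_below_def using fin j by simp
    also have "\<dots> = downs_below w1 v" unfolding downs_below_def using card_Suc_Diff1[OF fin iS] .
    finally have "downs_below ?w v = downs_below w1 v" .
    then show ?thesis using below[of v] by simp
  next
    case 2
    define B where "B = {p\<in>P. i < p \<and> p < v}"
    have "{p. p < v \<and> ?w p = Some Down} = A \<union> B"
    proof (intro set_eqI iffI)
      fix p assume p: "p \<in> {p. p < v \<and> ?w p = Some Down}"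
      then have "p \<noteq> i" "p \<noteq> j" "w1 p = Some Down" using 2 by (auto split: if_splits)
      then show "p \<in> A \<union> B" using p support1[of p] unfolding A_def B_def by (cases "p < i") auto
    next
      fix p assume "p \<in> A \<union> B"
      then show "p \<in> {p. p < v \<and> ?w p = Some Down}"
        using 2 j between[of p] unfolding A_def B_def by auto
    qed
    moreover have "finite A" "finite B" "A \<inter> B = {}"
      using finite_downs[of w1 "\<lambda>p. p < i"] finite_P unfolding A_def B_def by auto
    ultimately have "downs_below ?w v = card A + card B"
      unfolding downs_below_def by (simp add: card_Un_disjoint)
    then show ?thesis using card_downs_below_le[OF i(2,3)] unfolding downs_below_def A_def B_def by simp
  qed
qed

text \<open>Swap the first position \<open>i\<close> where the weights differ with the first wedge of \<open>w1\<close> to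
  its right; this moves a vee of \<open>w1\<close> to the right and keeps it dominating \<open>w2\<close>.\<close>
lemma bruhat_step_towards:
  assumes "w1 \<noteq> w2"
  obtains w1' where "bruhat_step w1 w1'" "dominated P w1' w2" "down_measure P w1' < down_measure P w1"
proof -
  obtain i where iP: "i \<in> P" and i: "w1 i = Some Down" "w2 i = Some Up" "\<And>p. p < i \<Longrightarrow> w1 p = w2 p"
    using first_difference[OF assms] by blast
  define J where "J = {p. i < p \<and> w1 p = Some Up}"
  have "J \<subseteq> P" unfolding J_def using support1 by auto
  then have finJ: "finite J" using finite_subset finite_P by blast
  have "J \<noteq> {}" using up_after_first_difference[OF i] unfolding J_def by blast
  define j where "j = Min J"
  have j: "i < j" "w1 j = Some Up" using Min_in[OF finJ \<open>J \<noteq> {}\<close>] unfolding j_def J_def by auto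
  have jP: "j \<in> P" using j support1 by auto
  have between: "w1 p = Some Down" if "p \<in> P" "i < p" "p < j" for p
  proof -
    have "p \<notin> J" using Min_le[OF finJ] that unfolding j_def by force
    then show ?thesis using that support1[of p] unfolding J_def by auto
  qed
  define w1' where "w1' = w1(i := Some Up, j := Some Down)"
  have "bruhat_step w1 w1'" unfolding bruhat_step_def w1'_def using i j by blast
  moreover have "dominated P w1' w2"
  proof
    show "w1' p \<in> {Some Down, Some Up} \<longleftrightarrow> p \<in> P" for p
      unfolding w1'_def using support1[of p] iP jP by auto
    show "p \<notin> P \<Longrightarrow> w1' p = w2 p" for p unfolding w1'_def using agree iP jP by auto
    show "downs_below w2 v \<le> downs_below w1' v" for v
      unfolding w1'_def using dominated_swap[OF i j between] .
    have "{p. w1' p = Some Down} = insert j ({p. w1 p = Some Down} - {i})"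
      unfolding w1'_def using j by auto
    moreover have fin: "finite {p. w1 p = Some Down}" using finite_downs[of w1 "\<lambda>_. True"] by simp
    ultimately have "card {p. w1' p = Some Down} = Suc (card ({p. w1 p = Some Down} - {i}))"
      using j(2) by simp
    also have "\<dots> = card {p. w1 p = Some Down}"
      using card_Suc_Diff1[OF fin, of i] i(1) by simp
    finally show "card {p. w1' p = Some Down} = card {p. w2 p = Some Down}" using total by simp
  qed (use finite_P support2 in auto)
  moreover have "down_measure P w1' < down_measure P w1"
  proof -
    let ?f = "\<lambda>p. nat (Max P - p)" and ?D = "{p\<in>P. w1 p = Some Down}"
    have D': "{p\<in>P. w1' p = Some Down} = insert j (?D - {i})" unfolding w1'_def using j jP by auto
    have "finite ?D" "i \<in> ?D" "j \<notin> ?D" using finite_P iP i j by auto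
    then have "down_measure P w1' = ?f j + sum ?f (?D - {i})"
      unfolding down_measure_def D' by (subst sum.insert) auto
    moreover have "sum ?f (?D - {i}) = down_measure P w1 - ?f i"
      unfolding down_measure_def using sum_diff1_nat[of ?f ?D i] \<open>i \<in> ?D\<close> by simp
    moreover have "?f i \<le> down_measure P w1"
      unfolding down_measure_def using \<open>finite ?D\<close> \<open>i \<in> ?D\<close> by (intro member_le_sum) auto
    moreover have "?f j < ?f i" using j Max_ge[OF finite_P jP] by simp
    ultimately show ?thesis by linarith
  qed
  ultimately show ?thesis using that by blast
qed

end

theorem dominated_bruhat_le: "dominated P w1 w2 \<Longrightarrow> bruhat_le w1 w2"
proof (induction "down_measure P w1" arbitrary: w1 rule: less_induct)
  case less
  interpret dominated P w1 w2 by (fact less.prems)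
  show ?case
  proof (cases "w1 = w2")
    case False
    then obtain w1' where "bruhat_step w1 w1'" "bruhat_le w1' w2"
      using bruhat_step_towards less.hyps by metis
    then show ?thesis unfolding bruhat_le_def by (simp add: converse_rtranclp_into_rtranclp)
  qed (simp add: bruhat_le_def)
qed

text \<open>Each arc of an oriented diagram carries exactly one vee.\<close>
definition down_end :: "weight \<Rightarrow> int \<times> int \<Rightarrow> int" where
  "down_end w e = (if w (fst e) = Some Down then fst e else snd e)"

lemma down_end_bij:
  assumes X: "arc_diagram X" and w: "arc_oriented X w"
  shows "bij_betw (down_end w) X {p. w p = Some Down}"
proof -
  have alt: "arcs_alternate X w" using arc_oriented_alternate[OF w] .
  have down: "w (down_end w e) = Some Down" if "e \<in> X" for e
    using arcs_alternateD[OF alt, of "fst e" "snd e"] that unfolding down_end_def by auto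
  have "{p. w p = Some Down} \<subseteq> down_end w ` X"
  proof
    fix p assume p: "p \<in> {p. w p = Some Down}"
    then have "p \<in> arc_ends X" using arc_ends_oriented[OF w] by simp
    then obtain q where "(p,q) \<in> X \<or> (q,p) \<in> X" unfolding arc_ends_def by blast
    then show "p \<in> down_end w ` X"
      using p arcs_alternateD[OF alt, of q p] unfolding down_end_def by force
  qed
  moreover have "inj_on (down_end w) X"
  proof (rule inj_onI, rule ccontr)
    fix e e' assume "e \<in> X" "e' \<in> X" "down_end w e = down_end w e'" "e \<noteq> e'"
    then show False using arc_diagram_arcD[OF X] unfolding down_end_def by (auto split: if_splits)
  qed
  ultimately show ?thesis using down unfolding bij_betw_def by blast
qed

lemma card_downs_eq_card_arcs:
  "arc_diagram X \<Longrightarrow> arc_oriented X w \<Longrightarrow> card {p. w p = Some Down} = card X"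
  using down_end_bij bij_betw_same_card by metis

text \<open>A vee left of \<open>v\<close> is either the vee of an arc ending left of \<open>v\<close> or the left end of an
  arc spanning \<open>v\<close>.\<close>
lemma downs_below_arcs:
  assumes X: "arc_diagram X" and w: "arc_oriented X w"
  shows "downs_below w v = card {e\<in>X. snd e < v} + card {e\<in>X. spans v e \<and> w (fst e) = Some Down}"
proof -
  let ?A = "{e\<in>X. snd e < v}" and ?B = "{e\<in>X. spans v e \<and> w (fst e) = Some Down}"
  have bij: "bij_betw (down_end w) X {p. w p = Some Down}" using down_end_bij[OF X w] .
  have lt: "fst e < snd e" if "e \<in> X" for e using arc_fst_less_snd[OF X that] .
  have "{p. p < v \<and> w p = Some Down} = down_end w ` (?A \<union> ?B)"
  proof (intro set_eqI iffI)
    fix p assume p: "p \<in> {p. p < v \<and> w p = Some Down}"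
    then obtain e where e: "e \<in> X" "p = down_end w e" using bij unfolding bij_betw_def by blast
    then have "e \<in> ?A \<union> ?B" using p lt[OF e(1)] unfolding down_end_def spans_def by (auto split: if_splits)
    then show "p \<in> down_end w ` (?A \<union> ?B)" using e by blast
  next
    fix p assume "p \<in> down_end w ` (?A \<union> ?B)"
    then obtain e where e: "e \<in> ?A \<union> ?B" "p = down_end w e" by blast
    then have "w p = Some Down" using bij unfolding bij_betw_def by blast
    moreover have "p < v" using e lt[of e] unfolding down_end_def spans_def by (auto split: if_splits)
    ultimately show "p \<in> {p. p < v \<and> w p = Some Down}" by simp
  qed
  moreover have "inj_on (down_end w) (?A \<union> ?B)"
    using bij inj_on_subset[of _ X "?A \<union> ?B"] unfolding bij_betw_def by blast
  moreover have "finite X" using arc_diagram_finite[OF X] .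
  moreover have "?A \<inter> ?B = {}" unfolding spans_def by auto
  ultimately show ?thesis unfolding downs_below_def by (simp add: card_image card_Un_disjoint)
qed

lemma same_block_fixed:
  assumes "same_block w0 v" "v p \<notin> {Some Down, Some Up} \<or> w0 p \<notin> {Some Down, Some Up}"
  shows "v p = w0 p"
proof -
  obtain \<pi> where \<pi>: "bij \<pi>" "\<forall>i. \<pi> i \<noteq> i \<longrightarrow> w0 i \<in> {Some Down, Some Up}" "v = w0 \<circ> \<pi>"
    using assms(1) unfolding same_block_def by blast
  show ?thesis
  proof (cases "\<pi> p = p")
    case False
    have "\<pi> (\<pi> p) \<noteq> \<pi> p" using False bij_is_inj[OF \<pi>(1)] by (metis injD)
    then have "w0 (\<pi> p) \<in> {Some Down, Some Up}" "w0 p \<in> {Some Down, Some Up}" using \<pi>(2) False by blast+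
    then show ?thesis using assms(2) \<pi>(3) by simp
  qed (use \<pi> in simp)
qed

lemma same_block_bruhat_step:
  assumes sb: "same_block w0 v" and st: "bruhat_step v v'"
  shows "same_block w0 v'"
proof -
  obtain \<pi> where \<pi>: "bij \<pi>" "finite {i. \<pi> i \<noteq> i}" "\<forall>i. \<pi> i \<noteq> i \<longrightarrow> w0 i \<in> {Some Down, Some Up}"
    "v = w0 \<circ> \<pi>"
    using sb unfolding same_block_def by blast
  obtain i j where ij: "i < j" "v i = Some Down" "v j = Some Up" "v' = v(i := Some Up, j := Some Down)"
    using st unfolding bruhat_step_def by blast
  define \<tau> where "\<tau> x = (if x = i then j else if x = j then i else x)" for x
  have "\<tau> (\<tau> x) = x" for x unfolding \<tau>_def by auto
  then have "bij \<tau>" by (metis bijI')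
  have v': "v' = w0 \<circ> (\<pi> \<circ> \<tau>)" unfolding ij(4) \<pi>(4) using ij(1-3) \<pi>(4)
    by (auto simp: \<tau>_def fun_eq_iff)
  have "{x. (\<pi> \<circ> \<tau>) x \<noteq> x} \<subseteq> {x. \<pi> x \<noteq> x} \<union> {i,j}" unfolding \<tau>_def by auto
  then have "finite {x. (\<pi> \<circ> \<tau>) x \<noteq> x}" using \<pi>(2) finite_subset by blast
  moreover have "w0 x \<in> {Some Down, Some Up}" if "(\<pi> \<circ> \<tau>) x \<noteq> x" for x
  proof (cases "\<pi> x = x")
    case True
    then have "x = i \<or> x = j" using that unfolding \<tau>_def by (auto split: if_splits)
    moreover have "w0 x = v x" using True \<pi>(4) by simp
    ultimately show ?thesis using ij by auto
  qed (use \<pi>(3) in blast)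
  ultimately show ?thesis using v' bij_comp[OF \<open>bij \<tau>\<close> \<pi>(1)] unfolding same_block_def by blast
qed

lemma same_block_bruhat_le: "bruhat_le v v' \<Longrightarrow> same_block w0 v \<Longrightarrow> same_block w0 v'"
  unfolding bruhat_le_def by (induction rule: rtranclp_induct) (auto intro: same_block_bruhat_step)

lemma bruhat_step_dom: "bruhat_step v v' \<Longrightarrow> dom v' = dom v"
proof -
  assume "bruhat_step v v'"
  then obtain i j where "v i = Some Down" "v j = Some Up" "v' = v(i := Some Up, j := Some Down)"
    unfolding bruhat_step_def by blast
  then show ?thesis by (simp add: insert_absorb domI)
qed

lemma bruhat_le_dom: "bruhat_le v v' \<Longrightarrow> dom v' = dom v"
  unfolding bruhat_le_def by (induction rule: rtranclp_induct) (simp_all add: bruhat_step_dom)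

lemma khovanov_block_bruhat_closed:
  assumes \<Lambda>: "khovanov_block n \<Lambda>" and lam: "lam \<in> \<Lambda>" and le: "bruhat_le lam nu"
  shows "nu \<in> \<Lambda>"
proof -
  obtain w0 where \<Lambda>_def: "\<Lambda> = {v. is_weight v \<and> same_block w0 v}"
    using \<Lambda> unfolding khovanov_block_def by blast
  have bounded: "finite (dom lam)" using \<Lambda> lam unfolding khovanov_block_def bounded_weight_def by blast
  have dom: "dom nu = dom lam" using bruhat_le_dom[OF le] .
  have same_dom: "nu p \<noteq> None \<longleftrightarrow> lam p \<noteq> None" for p using dom unfolding dom_def by blast
  have "is_weight lam" using lam unfolding \<Lambda>_def by simp
  then have "\<forall>i j k. i \<le> j \<and> j \<le> k \<and> lam i \<noteq> None \<and> lam k \<noteq> None \<longrightarrow> lam j \<noteq> None"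
    unfolding is_weight_def by blast
  then have "\<forall>i j k. i \<le> j \<and> j \<le> k \<and> nu i \<noteq> None \<and> nu k \<noteq> None \<longrightarrow> nu j \<noteq> None"
    unfolding same_dom .
  moreover have "\<forall>i j. i < j \<and> i \<notin> dom nu \<and> j \<notin> dom nu \<longrightarrow> \<not> (nu i = Some Down \<and> nu j = Some Up)"
    by auto
  moreover have "finite (dom nu)" using bounded dom by simp
  ultimately have "is_weight nu" unfolding is_weight_def by blast
  then show ?thesis using same_block_bruhat_le[OF le] lam unfolding \<Lambda>_def by simp
qed

lemma khovanov_block_agree:
  assumes "khovanov_block n \<Lambda>" "lam \<in> \<Lambda>" "mu \<in> \<Lambda>" "lam p \<notin> {Some Down, Some Up}"
  shows "mu p = lam p"
proof -
  obtain w0 where "\<Lambda> = {v. is_weight v \<and> same_block w0 v}" using assms(1) unfolding khovanov_block_def by blast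
  then have "same_block w0 lam" "same_block w0 mu" using assms(2,3) by auto
  then show ?thesis using same_block_fixed[of w0 lam p] same_block_fixed[of w0 mu p] assms(4) by auto
qed

section \<open>Surgery moves vees to the right\<close>

context stacked_diagram
begin

lemma down_potential_initial:
  assumes "arc_oriented a lam" "arc_oriented b lam" "arc_oriented b mu" "arc_oriented d mu"
  shows "down_potential False (edges a b d {}) (init_labels a b d lam mu) a v
      = card {e\<in>a. spans v e \<and> lam (fst e) = Some Down}"
    and "down_potential True (edges a b d {}) (init_labels a b d lam mu) d v
      = card {e\<in>d. spans v e \<and> mu (fst e) = Some Down}"
proof -
  note alt = assms[THEN arc_oriented_alternate]
  have "left_down False (edges a b d {}) (init_labels a b d lam mu) a e \<longleftrightarrow> lam (fst e) = Some Down"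
    if "e \<in> a" for e
    using left_down_iff_weight[OF A B ends_a ends_b finite_P alt(1,2) _ _ that]
      conn_initial_iff[of False] init_labels_value by simp
  then show "down_potential False (edges a b d {}) (init_labels a b d lam mu) a v
      = card {e\<in>a. spans v e \<and> lam (fst e) = Some Down}"
    unfolding down_potential_def by (intro arg_cong[where f=card]) auto
  have "left_down True (edges a b d {}) (init_labels a b d lam mu) d e \<longleftrightarrow> mu (fst e) = Some Down"
    if "e \<in> d" for e
    using left_down_iff_weight[OF D B ends_d ends_b finite_P alt(4,3) _ _ that]
      conn_initial_iff[of True] init_labels_value by simp
  then show "down_potential True (edges a b d {}) (init_labels a b d lam mu) d v
      = card {e\<in>d. spans v e \<and> mu (fst e) = Some Down}"
    unfolding down_potential_def by (intro arg_cong[where f=card]) auto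
qed

lemma down_potential_final:
  assumes L: "constant_on_components (edges a b d b) L" and nu: "final_weight_spec lam L nu"
  shows "down_potential False (edges a b d b) L a v = card {e\<in>a. spans v e \<and> nu (fst e) = Some Down}"
    and "down_potential True (edges a b d b) L d v = card {e\<in>d. spans v e \<and> nu (fst e) = Some Down}"
proof -
  have alt: "arcs_alternate a nu" "arcs_alternate d nu"
    using nu arc_oriented_alternate unfolding final_weight_spec_def by blast+
  have "left_down False (edges a b d b) L a e \<longleftrightarrow> nu (fst e) = Some Down" if "e \<in> a" for e
    using left_down_iff_weight[OF A D ends_a ends_d finite_P alt _ _ that]
      conn_final_iff final_labels[OF L nu] by simp
  then show "down_potential False (edges a b d b) L a v = card {e\<in>a. spans v e \<and> nu (fst e) = Some Down}"
    unfolding down_potential_def by (intro arg_cong[where f=card]) auto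
  have "left_down True (edges a b d b) L d e \<longleftrightarrow> nu (fst e) = Some Down" if "e \<in> d" for e
    using left_down_iff_weight[OF D A ends_d ends_a finite_P alt(2,1) _ _ that]
      conn_final_iff final_labels[OF L nu] by (simp add: Un_commute)
  then show "down_potential True (edges a b d b) L d v = card {e\<in>d. spans v e \<and> nu (fst e) = Some Down}"
    unfolding down_potential_def by (intro arg_cong[where f=card]) auto
qed

lemma surgery_dominated:
  assumes P: "P = {p. lam p \<in> {Some Down, Some Up}}"
    and oriented: "arc_oriented a lam" "arc_oriented b lam" "arc_oriented b mu" "arc_oriented d mu"
    and ord: "distinct ord" "set ord = b"
    and L: "L \<in> set (surg a b d {} (init_labels a b d lam mu) ord)"
    and nu: "nu = final_weight a b d lam L"
  shows "dominated P lam nu" and "(\<And>p. p \<notin> P \<Longrightarrow> mu p = lam p) \<Longrightarrow> dominated P mu nu"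
proof -
  have spec: "final_weight_spec lam L nu" using final_weight_spec_final_weight[OF P] nu by simp
  have oriented_nu: "arc_oriented a nu" "arc_oriented d nu" using spec unfolding final_weight_spec_def by auto
  have surg: "constant_on_components (edges a b d b) L \<and>
      down_potential s (edges a b d b) L X v \<le> down_potential s (edges a b d {}) (init_labels a b d lam mu) X v"
    if "arc_diagram X" for s X v
    using surg_potential_le[of "{}" ord X "init_labels a b d lam mu" L s v] ord that init_labels_constant L
    by simp
  have L_const: "constant_on_components (edges a b d b) L" using surg[OF A] by blast
  have support: "w p \<in> {Some Down, Some Up} \<longleftrightarrow> p \<in> P" if "arc_oriented M w" "arc_ends M = P" for M w p
    using arc_ends_oriented[OF that(1)] that(2) by blast
  have agree: "nu p = lam p" if "p \<notin> P" for p using spec that unfolding final_weight_spec_def by blast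
  show "dominated P lam nu"
  proof
    show "downs_below nu v \<le> downs_below lam v" for v
      using downs_below_arcs[OF A oriented(1)] downs_below_arcs[OF A oriented_nu(1)]
        surg[OF A, of False v] down_potential_initial(1)[OF oriented] down_potential_final(1)[OF L_const spec]
      by simp
    show "card {p. lam p = Some Down} = card {p. nu p = Some Down}"
      using card_downs_eq_card_arcs[OF A oriented(1)] card_downs_eq_card_arcs[OF A oriented_nu(1)] by simp
  qed (use finite_P support[OF oriented(1) ends_a] support[OF oriented_nu(1) ends_a] agree in auto)
  assume mu_lam: "\<And>p. p \<notin> P \<Longrightarrow> mu p = lam p"
  show "dominated P mu nu"
  proof
    show "downs_below nu v \<le> downs_below mu v" for v
      using downs_below_arcs[OF D oriented(4)] downs_below_arcs[OF D oriented_nu(2)]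
        surg[OF D, of True v] down_potential_initial(2)[OF oriented] down_potential_final(2)[OF L_const spec]
      by simp
    show "card {p. mu p = Some Down} = card {p. nu p = Some Down}"
      using card_downs_eq_card_arcs[OF D oriented(4)] card_downs_eq_card_arcs[OF D oriented_nu(2)] by simp
  qed (use finite_P support[OF oriented(4) ends_d] support[OF oriented_nu(2) ends_d] agree mu_lam in auto)
qed

end

section \<open>The product in Khovanov's algebra\<close>

lemma khov_mult_nonzeroD:
  assumes "khov_mult ord (a, lam, b) (c, mu, d) (a', nu, d') \<noteq> (0 :: 'k :: comm_ring_1)"
  obtains L where "c = b" "a' = a" "d' = d"
    and "L \<in> set (surg a b d {} (init_labels a b d lam mu) ord)" "nu = final_weight a b d lam L"
proof -
  have "c = b \<and> a' = a \<and> d' = d \<and>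
      filter (\<lambda>L. final_weight a b d lam L = nu) (surg a b d {} (init_labels a b d lam mu) ord) \<noteq> []"
    using assms unfolding khov_mult_def by (auto split: if_splits)
  then show ?thesis using that by (metis (mono_tags, lifting) filter_False)
qed

lemma stacked_diagram_basis:
  assumes "basis_vec \<Lambda> (a, lam, b)" and "basis_vec \<Lambda> (b, mu, d)"
  shows "stacked_diagram a b d {p. lam p \<in> {Some Down, Some Up}}"
proof
  have "arc_ends a = {p. lam p \<in> {Some Down, Some Up}}" "arc_ends b = {p. lam p \<in> {Some Down, Some Up}}"
    "arc_ends b = {p. mu p \<in> {Some Down, Some Up}}" "arc_ends d = {p. mu p \<in> {Some Down, Some Up}}"
    using assms arc_ends_oriented unfolding basis_vec_def by auto
  then show "arc_ends a = {p. lam p \<in> {Some Down, Some Up}}" "arc_ends b = {p. lam p \<in> {Some Down, Some Up}}"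
    "arc_ends d = {p. lam p \<in> {Some Down, Some Up}}" by simp_all
qed (use assms in \<open>simp_all add: basis_vec_def\<close>)

theorem corollary3p2:
  fixes \<Lambda> :: "weight set" and n :: nat
    and a b c d a' d' :: "(int \<times> int) set" and lam mu nu :: weight
    and ord :: "(int \<times> int) list"
  assumes "khovanov_block n \<Lambda>"
    and "basis_vec \<Lambda> (a, lam, b)" and "basis_vec \<Lambda> (c, mu, d)"
    and "admissible_order b ord"
    and "khov_mult ord (a, lam, b) (c, mu, d) (a', nu, d') \<noteq> (0 :: 'k :: comm_ring_1)"
  shows "a' = a \<and> d' = d \<and> nu \<in> \<Lambda> \<and> basis_vec \<Lambda> (a', nu, d') \<and>
         bruhat_le lam nu \<and> bruhat_le mu nu"
proof -
  obtain L where cb: "c = b" and a': "a' = a" and d': "d' = d"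
    and L: "L \<in> set (surg a b d {} (init_labels a b d lam mu) ord)" and nu: "nu = final_weight a b d lam L"
    using khov_mult_nonzeroD[OF assms(5)] .
  define P where "P = {p. lam p \<in> {Some Down, Some Up}}"
  interpret stacked_diagram a b d P using stacked_diagram_basis assms(2,3) cb unfolding P_def by blast
  have lam: "lam \<in> \<Lambda>" "arc_oriented a lam" "arc_oriented b lam"
    and mu: "mu \<in> \<Lambda>" "arc_oriented b mu" "arc_oriented d mu"
    using assms(2,3) cb unfolding basis_vec_def by auto
  have ord: "distinct ord" "set ord = b" using assms(4) unfolding admissible_order_def by auto
  note dominated = surgery_dominated[OF P_def lam(2,3) mu(2,3) ord L nu]
  have "bruhat_le lam nu" using dominated_bruhat_le[OF dominated(1)] .
  moreover have "bruhat_le mu nu"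
    using dominated_bruhat_le[OF dominated(2)] khovanov_block_agree[OF assms(1) lam(1) mu(1)] P_def by auto
  moreover have "nu \<in> \<Lambda>" using khovanov_block_bruhat_closed[OF assms(1) lam(1) \<open>bruhat_le lam nu\<close>] .
  moreover have "arc_oriented a nu" "arc_oriented d nu"
    using final_weight_spec_final_weight[OF P_def] nu unfolding final_weight_spec_def by auto
  ultimately show ?thesis using A D a' d' unfolding basis_vec_def by simp
qed

end
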